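(* Let $n\ge 2$ and assume the standing assumptions in the context hold. Suppose $\operatorname{rank}(\Psi_{t,t+1})=n$ for all $1\le t\le\sigma-1$. Define $\Upsilon(t,t+1)=\hat{\mathcal O}_{t+1}^\dagger\mathcal Z_{t,t+1}\Psi_{t,t+1}^\dagger$ for $1\le t\le\sigma-1$. For $\mu\in\mathbb{S}$ define $$\Upsilon(\mu,1)=\Upsilon(1,2)^{-1}\Upsilon(2,3)^{-1}\cdots\Upsilon(\mu-1,\mu)^{-1},$$ with $\Upsilon(1,1)=I_n$. Set $$\check A_\mu=\Upsilon(\mu,1)\hat A_\mu\Upsilon(\mu,1)^{-1},\quad \check B_\mu=\Upsilon(\mu,1)\hat B_\mu,\quad \check C_\mu=\hat C_\mu\Upsilon(\mu,1)^{-1},\quad \check D_\mu=\hat D_\mu,$$ and let $\check{\mathcal P}=\{(\check A_\mu,\check B_\mu,\check C_\mu,\check D_\mu)\}_{\mu\in\mathbb{S}}$. Then $\Upsilon(\mu,1)=T_1^{-1}T_\mu$ for every $\mu$. Moreover, the LSS with discrete states $\check{\mathcal P}$ has the same input-output map as the true LSS. That is, for every hybrid input (arbitrary switching sequence, with no dwell-time restriction, and arbitrary continuous input) and every initial state $x(0)$, the output of the LSS with discrete states $\check{\mathcal P}$ started from $T_1^{-1}x(0)$ equals the output of the true LSS started from $x(0)$. In particular, the Markov parameters of the two systems coincide.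
   Context: **System data.** Consider the true LSS $$x(k+1)=A_{\varphi(k)}x(k)+B_{\varphi(k)}u(k),\qquad y(k)=C_{\varphi(k)}x(k)+D_{\varphi(k)}u(k),$$ with state dimension $n$ and discrete states $\mathcal P_j=(A_j,B_j,C_j,D_j)$, $j\in\mathbb{S}=\{1,\dots,\sigma\}$. Data $(u(k),\varphi(k),y(k))$, $k\in[1,N]$, are observed, and $\varphi$ is surjective onto $\mathbb{S}$. **Switching times and dwell times.** Write $k_0=1<k_1<\dots<k_{i^*}<k_{i^*+1}=N$, with $\varphi$ constant on each $[k_i,k_{i+1})$ and changing at each $k_i$, $1\le i\le i^*$. Set $\delta_*=\min_i(k_{i+1}-k_i)$. **Standing assumptions.** - Each $\mathcal P_j$ is minimal of McMillan degree $n$, has invertible $A_j$, and is BIBO stable. - $\delta_*\ge n$ for the observed data. - Estimates $\hat{\mathcal P}_j=(\hat A_j,\hat B_j,\hat C_j,\hat D_j)$, one per mode, satisfy $$\hat A_j=T_j^{-1}A_jT_j,\quad \hat B_j=T_j^{-1}B_j,\quad \hat C_j=C_jT_j,\quad \hat D_j=D_j$$ for unknown nonsingular $T_j$. **Constructions.** Let $q=\delta_*-1$, and let $$\hat{\mathcal O}_j=[\hat C_j^T\ (\hat C_j\hat A_j)^T\cdots(\hat C_j\hat A_j^{q})^T]^T.$$ Let $\hat\Gamma_j$ be the block lower-triangular Toeplitz matrix with $(q+1)\times(q+1)$ blocks, diagonal blocks $\hat D_j$, and $(r,s)$ block $\hat C_j\hat A_j^{r-s-1}\hat B_j$ for $r>s$.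 For $1\le i\le i^*$, write $\nu=\varphi(k_{i-1})$ and $\mu=\varphi(k_i)$, and define: - $\hat x(k_{i-1})=\hat{\mathcal O}_\nu^\dagger(Y_{i-1}-\hat\Gamma_\nu U_{i-1})$, with $Y_{i-1},U_{i-1}$ the stacked outputs and inputs over $[k_{i-1},k_{i-1}+q]$, and $X^\dagger=(X^TX)^{-1}X^T$; - $\kappa_{i-1}=\hat A_\nu^{k_i-k_{i-1}}\hat x(k_{i-1})+\sum_{l=k_{i-1}}^{k_i-1}\hat A_\nu^{k_i-l-1}\hat B_\nu u(l)$; - $\zeta_i(k)=y(k)-\hat D_\mu u(k)-\sum_{l=k_i}^{k-1}\hat C_\mu\hat A_\mu^{k-l-1}\hat B_\mu u(l)$ for $k\in[k_i,k_{i+1})$; - $Z_i=[\zeta_i(k_i)^T\cdots\zeta_i(k_i+q)^T]^T$. Let $\mathcal N_{\nu,\mu}=\{i\in[1,i^*]:\varphi(k_{i-1})=\nu,\ \varphi(k_i)=\mu\}$. Let $\Psi_{\nu,\mu}$ have columns $\kappa_{i-1}$ and $\mathcal Z_{\nu,\mu}$ have columns $Z_i$, for $i\in\mathcal N_{\nu,\mu}$ in increasing order. Set $\Psi^\dagger=\Psi^T(\Psi\Psi^T)^{-1}$. *)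

theory Defs
  imports "Jordan_Normal_Form.Gauss_Jordan_Elimination" "Jordan_Normal_Form.DL_Rank"
begin

definition minv :: "real mat \<Rightarrow> real mat" where
  "minv M = the (mat_inverse M)"

definition pinv_left :: "real mat \<Rightarrow> real mat" where
  "pinv_left X = minv (transpose_mat X * X) * transpose_mat X"

definition pinv_right :: "real mat \<Rightarrow> real mat" where
  "pinv_right X = transpose_mat X * minv (X * transpose_mat X)"

definition vsum :: "nat \<Rightarrow> (nat \<Rightarrow> real vec) \<Rightarrow> nat set \<Rightarrow> real vec" where
  "vsum d f S = vec d (\<lambda>r. \<Sum>l\<in>S. f l $ r)"

primrec lss_state :: "(nat \<Rightarrow> real mat) \<Rightarrow> (nat \<Rightarrow> real mat) \<Rightarrow> (nat \<Rightarrow> nat)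
    \<Rightarrow> (nat \<Rightarrow> real vec) \<Rightarrow> real vec \<Rightarrow> nat \<Rightarrow> real vec" where
  "lss_state A B phi u x0 0 = x0"
| "lss_state A B phi u x0 (Suc k) =
     A (phi k) *\<^sub>v lss_state A B phi u x0 k + B (phi k) *\<^sub>v u k"

definition lss_output :: "(nat \<Rightarrow> real mat) \<Rightarrow> (nat \<Rightarrow> real mat) \<Rightarrow> (nat \<Rightarrow> real mat)
    \<Rightarrow> (nat \<Rightarrow> real mat) \<Rightarrow> (nat \<Rightarrow> nat) \<Rightarrow> (nat \<Rightarrow> real vec) \<Rightarrow> real vec \<Rightarrow> nat \<Rightarrow> real vec" where
  "lss_output A B C D phi u x0 k =
     C (phi k) *\<^sub>v lss_state A B phi u x0 k + D (phi k) *\<^sub>v u k"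

text \<open>Markov parameter for a mode word w = [j0, j1, ..., jk] (in time order):
  D j0 if k = 0, and C jk * A j(k-1) * ... * A j1 * B j0 otherwise.\<close>
fun markov :: "(nat \<Rightarrow> real mat) \<Rightarrow> (nat \<Rightarrow> real mat) \<Rightarrow> (nat \<Rightarrow> real mat)
    \<Rightarrow> (nat \<Rightarrow> real mat) \<Rightarrow> nat list \<Rightarrow> real mat" where
  "markov A B C D [] = 0\<^sub>m 0 0"
| "markov A B C D [j] = D j"
| "markov A B C D (j0 # j1 # w) =
     C (last (j1 # w)) * foldl (\<lambda>M j. A j * M) (B j0) (butlast (j1 # w))"

text \<open>Extended observability matrix [C; CA; ...; CA^q] (p = number of outputs).\<close>
definition obs_mat :: "nat \<Rightarrow> nat \<Rightarrow> real mat \<Rightarrow> real mat \<Rightarrow> real mat" where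
  "obs_mat p q A C = mat (Suc q * p) (dim_col A) (\<lambda>(r, c). (C * A ^\<^sub>m (r div p)) $$ (r mod p, c))"

text \<open>Controllability matrix [B AB ... A^(n-1) B] (m = number of inputs).\<close>
definition ctrb_mat :: "nat \<Rightarrow> nat \<Rightarrow> real mat \<Rightarrow> real mat \<Rightarrow> real mat" where
  "ctrb_mat n m A B = mat n (n * m) (\<lambda>(r, c). (A ^\<^sub>m (c div m) * B) $$ (r, c mod m))"

definition minimal_sys :: "nat \<Rightarrow> nat \<Rightarrow> nat \<Rightarrow> real mat \<Rightarrow> real mat \<Rightarrow> real mat \<Rightarrow> bool" where
  "minimal_sys n m p A B C \<longleftrightarrow>
     vec_space.rank n (ctrb_mat n m A B) = n \<and> vec_space.rank (n * p) (obs_mat p (n - 1) A C) = n"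

definition bibo_stable :: "nat \<Rightarrow> nat \<Rightarrow> nat \<Rightarrow> real mat \<Rightarrow> real mat \<Rightarrow> real mat \<Rightarrow> real mat \<Rightarrow> bool" where
  "bibo_stable n m p A B C D \<longleftrightarrow>
     (\<forall>u. (\<forall>k. u k \<in> carrier_vec m) \<longrightarrow> (\<exists>M. \<forall>k i. i < m \<longrightarrow> \<bar>u k $ i\<bar> \<le> M) \<longrightarrow>
       (\<exists>M. \<forall>k i. i < p \<longrightarrow>
          \<bar>lss_output (\<lambda>_. A) (\<lambda>_. B) (\<lambda>_. C) (\<lambda>_. D) (\<lambda>_. 0) u (0\<^sub>v n) k $ i\<bar> \<le> M))"

text \<open>Block lower-triangular Toeplitz matrix with (q+1)x(q+1) blocks.\<close>
definition toep_mat :: "nat \<Rightarrow> nat \<Rightarrow> nat \<Rightarrow> real mat \<Rightarrow> real mat \<Rightarrow> real mat \<Rightarrow> real mat \<Rightarrow> real mat" where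
  "toep_mat p m q A B C D = mat (Suc q * p) (Suc q * m) (\<lambda>(r, c).
     (let a = r div p; b = c div m in
      if a = b then D $$ (r mod p, c mod m)
      else if b < a then (C * A ^\<^sub>m (a - b - 1) * B) $$ (r mod p, c mod m)
      else 0))"

definition stack :: "nat \<Rightarrow> nat \<Rightarrow> (nat \<Rightarrow> real vec) \<Rightarrow> nat \<Rightarrow> real vec" where
  "stack d q f k = vec (Suc q * d) (\<lambda>r. f (k + r div d) $ (r mod d))"

definition dstar :: "(nat \<Rightarrow> nat) \<Rightarrow> nat \<Rightarrow> nat" where
  "dstar ks istar = Min ((\<lambda>i. ks (Suc i) - ks i) ` {0..istar})"

definition xhat :: "nat \<Rightarrow> nat \<Rightarrow> nat \<Rightarrow> (nat \<Rightarrow> real mat) \<Rightarrow> (nat \<Rightarrow> real mat) \<Rightarrow> (nat \<Rightarrow> real mat)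
    \<Rightarrow> (nat \<Rightarrow> real mat) \<Rightarrow> (nat \<Rightarrow> nat) \<Rightarrow> (nat \<Rightarrow> real vec) \<Rightarrow> (nat \<Rightarrow> real vec) \<Rightarrow> nat \<Rightarrow> real vec" where
  "xhat p m q Ah Bh Ch Dh phi u y k =
     pinv_left (obs_mat p q (Ah (phi k)) (Ch (phi k))) *\<^sub>v
       (stack p q y k - toep_mat p m q (Ah (phi k)) (Bh (phi k)) (Ch (phi k)) (Dh (phi k)) *\<^sub>v stack m q u k)"

text \<open>kappa_(i-1) (argument i, 1 <= i <= istar).\<close>
definition kappa :: "nat \<Rightarrow> nat \<Rightarrow> nat \<Rightarrow> nat \<Rightarrow> (nat \<Rightarrow> real mat) \<Rightarrow> (nat \<Rightarrow> real mat) \<Rightarrow> (nat \<Rightarrow> real mat)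
    \<Rightarrow> (nat \<Rightarrow> real mat) \<Rightarrow> (nat \<Rightarrow> nat) \<Rightarrow> (nat \<Rightarrow> real vec) \<Rightarrow> (nat \<Rightarrow> real vec) \<Rightarrow> (nat \<Rightarrow> nat) \<Rightarrow> nat \<Rightarrow> real vec" where
  "kappa n p m q Ah Bh Ch Dh phi u y ks i =
     (let nu = phi (ks (i - 1)) in
      Ah nu ^\<^sub>m (ks i - ks (i - 1)) *\<^sub>v xhat p m q Ah Bh Ch Dh phi u y (ks (i - 1))
      + vsum n (\<lambda>l. Ah nu ^\<^sub>m (ks i - l - 1) *\<^sub>v (Bh nu *\<^sub>v u l)) {ks (i - 1)..ks i - 1})"

definition zeta :: "nat \<Rightarrow> (nat \<Rightarrow> real mat) \<Rightarrow> (nat \<Rightarrow> real mat) \<Rightarrow> (nat \<Rightarrow> real mat)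
    \<Rightarrow> (nat \<Rightarrow> real mat) \<Rightarrow> (nat \<Rightarrow> nat) \<Rightarrow> (nat \<Rightarrow> real vec) \<Rightarrow> (nat \<Rightarrow> real vec) \<Rightarrow> (nat \<Rightarrow> nat)
    \<Rightarrow> nat \<Rightarrow> nat \<Rightarrow> real vec" where
  "zeta p Ah Bh Ch Dh phi u y ks i k =
     (let mu = phi (ks i) in
      y k - Dh mu *\<^sub>v u k
      - vsum p (\<lambda>l. Ch mu *\<^sub>v (Ah mu ^\<^sub>m (k - l - 1) *\<^sub>v (Bh mu *\<^sub>v u l))) {ks i..k - 1})"

definition Zvec :: "nat \<Rightarrow> nat \<Rightarrow> (nat \<Rightarrow> real mat) \<Rightarrow> (nat \<Rightarrow> real mat) \<Rightarrow> (nat \<Rightarrow> real mat)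
    \<Rightarrow> (nat \<Rightarrow> real mat) \<Rightarrow> (nat \<Rightarrow> nat) \<Rightarrow> (nat \<Rightarrow> real vec) \<Rightarrow> (nat \<Rightarrow> real vec) \<Rightarrow> (nat \<Rightarrow> nat)
    \<Rightarrow> nat \<Rightarrow> real vec" where
  "Zvec p q Ah Bh Ch Dh phi u y ks i = stack p q (zeta p Ah Bh Ch Dh phi u y ks i) (ks i)"

definition trans_idx :: "(nat \<Rightarrow> nat) \<Rightarrow> (nat \<Rightarrow> nat) \<Rightarrow> nat \<Rightarrow> nat \<Rightarrow> nat \<Rightarrow> nat set" where
  "trans_idx phi ks istar nu mu = {i \<in> {1..istar}. phi (ks (i - 1)) = nu \<and> phi (ks i) = mu}"

definition Psi_mat :: "nat \<Rightarrow> nat \<Rightarrow> nat \<Rightarrow> (nat \<Rightarrow> real mat) \<Rightarrow> (nat \<Rightarrow> real mat) \<Rightarrow> (nat \<Rightarrow> real mat)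
    \<Rightarrow> (nat \<Rightarrow> real mat) \<Rightarrow> (nat \<Rightarrow> nat) \<Rightarrow> (nat \<Rightarrow> real vec) \<Rightarrow> (nat \<Rightarrow> real vec) \<Rightarrow> (nat \<Rightarrow> nat)
    \<Rightarrow> nat \<Rightarrow> nat \<Rightarrow> nat \<Rightarrow> real mat" where
  "Psi_mat n p m Ah Bh Ch Dh phi u y ks istar nu mu =
     mat_of_cols n (map (kappa n p m (dstar ks istar - 1) Ah Bh Ch Dh phi u y ks)
                        (sorted_list_of_set (trans_idx phi ks istar nu mu)))"

definition Zcal_mat :: "nat \<Rightarrow> (nat \<Rightarrow> real mat) \<Rightarrow> (nat \<Rightarrow> real mat) \<Rightarrow> (nat \<Rightarrow> real mat)
    \<Rightarrow> (nat \<Rightarrow> real mat) \<Rightarrow> (nat \<Rightarrow> nat) \<Rightarrow> (nat \<Rightarrow> real vec) \<Rightarrow> (nat \<Rightarrow> real vec) \<Rightarrow> (nat \<Rightarrow> nat)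
    \<Rightarrow> nat \<Rightarrow> nat \<Rightarrow> nat \<Rightarrow> real mat" where
  "Zcal_mat p Ah Bh Ch Dh phi u y ks istar nu mu =
     mat_of_cols (Suc (dstar ks istar - 1) * p)
       (map (Zvec p (dstar ks istar - 1) Ah Bh Ch Dh phi u y ks)
            (sorted_list_of_set (trans_idx phi ks istar nu mu)))"

definition Ups_step :: "nat \<Rightarrow> nat \<Rightarrow> nat \<Rightarrow> (nat \<Rightarrow> real mat) \<Rightarrow> (nat \<Rightarrow> real mat) \<Rightarrow> (nat \<Rightarrow> real mat)
    \<Rightarrow> (nat \<Rightarrow> real mat) \<Rightarrow> (nat \<Rightarrow> nat) \<Rightarrow> (nat \<Rightarrow> real vec) \<Rightarrow> (nat \<Rightarrow> real vec) \<Rightarrow> (nat \<Rightarrow> nat)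
    \<Rightarrow> nat \<Rightarrow> nat \<Rightarrow> real mat" where
  "Ups_step n p m Ah Bh Ch Dh phi u y ks istar t =
     pinv_left (obs_mat p (dstar ks istar - 1) (Ah (Suc t)) (Ch (Suc t)))
     * Zcal_mat p Ah Bh Ch Dh phi u y ks istar t (Suc t)
     * pinv_right (Psi_mat n p m Ah Bh Ch Dh phi u y ks istar t (Suc t))"

definition Ups_chain :: "nat \<Rightarrow> (nat \<Rightarrow> real mat) \<Rightarrow> nat \<Rightarrow> real mat" where
  "Ups_chain n U mu = foldl (\<lambda>M t. M * minv (U t)) (1\<^sub>m n) [1..<mu]"

end

theory Submission
  imports Defs
begin

text \<open>On a stretch of constant mode j lasting at least n steps, the stacked outputs minus the
  Toeplitz-weighted inputs equal O_j x, and O_j has full column rank; so xhat recovers the state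
  in the coordinates T_j^(-1) x of the estimated realization. Around a switch t -> t+1 the columns
  kappa and Z are then T_t^(-1) x and O_(t+1) T_(t+1)^(-1) x for the same true state x, i.e.
  Z = O_(t+1) (T_(t+1)^(-1) T_t) Psi, and the two pseudo-inverses give
  Upsilon(t,t+1) = T_(t+1)^(-1) T_t. The product of the inverses telescopes to T_1^(-1) T_mu,
  so the rebased realization of every mode is the true one in the common coordinates T_1^(-1) x,
  and a single global change of coordinates preserves outputs and Markov parameters.\<close>

section \<open>Inverses and pseudo-inverses\<close>

lemma minv_mat:
  fixes A :: "real mat"
  assumes A: "A \<in> carrier_mat n n" and det: "det A \<noteq> 0"
  shows "minv A \<in> carrier_mat n n" "A * minv A = 1\<^sub>m n" "minv A * A = 1\<^sub>m n"
proof -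
  have "A \<in> Units (ring_mat TYPE(real) n undefined)" by (rule det_non_zero_imp_unit[OF A det])
  then obtain B where B: "mat_inverse A = Some B" using mat_inverse(1)[OF A] by fastforce
  show "minv A \<in> carrier_mat n n" "A * minv A = 1\<^sub>m n" "minv A * A = 1\<^sub>m n"
    using mat_inverse(2)[OF A B] unfolding minv_def B by auto
qed

lemma minv_eqI:
  fixes A B :: "real mat"
  assumes A: "A \<in> carrier_mat n n" and B: "B \<in> carrier_mat n n" and AB: "A * B = 1\<^sub>m n"
  shows "minv A = B"
proof -
  have "det A * det B = 1" using det_mult[OF A B] AB by simp
  then have det: "det A \<noteq> 0" by auto
  have "minv A = minv A * (A * B)" using AB minv_mat(1)[OF A det] by simp
  also have "\<dots> = (minv A * A) * B" using minv_mat(1)[OF A det] A B by (simp add: assoc_mult_mat)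
  finally show ?thesis using minv_mat(3)[OF A det] B by simp
qed

lemma minv_invertible_mat:
  fixes A :: "real mat"
  assumes A: "A \<in> carrier_mat n n" and inv: "invertible_mat A"
  shows "minv A \<in> carrier_mat n n" "A * minv A = 1\<^sub>m n" "minv A * A = 1\<^sub>m n"
proof -
  obtain B where AB: "A * B = 1\<^sub>m (dim_row A)" and BA: "B * A = 1\<^sub>m (dim_row B)"
    using inv unfolding invertible_mat_def inverts_mat_def by blast
  have B: "B \<in> carrier_mat n n"
    using AB BA A by (metis carrier_matD carrier_matI index_mult_mat(2,3) index_one_mat(2,3))
  then have AB: "A * B = 1\<^sub>m n" and BA: "B * A = 1\<^sub>m n" using AB BA A by auto
  show "minv A \<in> carrier_mat n n" "A * minv A = 1\<^sub>m n" "minv A * A = 1\<^sub>m n"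
    using minv_eqI[OF A B AB] B AB BA by auto
qed

lemma scalar_prod_self_eq_0_iff:
  fixes v :: "real vec"
  assumes "v \<in> carrier_vec n"
  shows "v \<bullet> v = 0 \<longleftrightarrow> v = 0\<^sub>v n"
  using conjugate_square_eq_0_vec[OF assms] by (simp add: scalar_prod_def conjugate_vec_def)

lemma (in vec_space) max_lin_indpt_cols_exists:
  assumes "X \<in> carrier_mat n c"
  shows "\<exists>S. maximal S (\<lambda>T. T \<subseteq> set (cols X) \<and> lin_indpt T)"
  using maximal_exists[of "\<lambda>T. T \<subseteq> set (cols X) \<and> lin_indpt T" "card (set (cols X))" "{}"]
  by (meson List.finite_set card_mono empty_iff empty_subsetI finite_lin_indpt2 rev_finite_subset)

lemma (in vec_space) full_col_rank_mult_vec_eq_0: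
  assumes X: "X \<in> carrier_mat n c" and rk: "rank X = c"
    and v: "v \<in> carrier_vec c" and Xv: "X *\<^sub>v v = 0\<^sub>v n"
  shows "v = 0\<^sub>v c"
proof (rule ccontr)
  assume nz: "v \<noteq> 0\<^sub>v c"
  have "distinct (cols X)"
  proof (rule ccontr)
    assume "\<not> distinct (cols X)"
    then have "card (set (cols X)) < c"
      using X card_distinct[of "cols X"] card_length[of "cols X"]
      by (metis cols_length carrier_matD(2) le_neq_implies_less)
    moreover obtain S where S: "maximal S (\<lambda>T. T \<subseteq> set (cols X) \<and> lin_indpt T)"
      using max_lin_indpt_cols_exists[OF X] by blast
    moreover have "card S \<le> card (set (cols X))" using S by (simp add: card_mono maximal_def)
    ultimately show False using rank_card_indpt[OF X S] rk by simp
  qed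
  then show False using full_rank_lin_indpt[OF X rk] lin_depI[OF X v nz Xv] by blast
qed

text \<open>The columns of a full-row-rank matrix span the whole space, so a vector orthogonal to
  all of them is orthogonal to itself.\<close>
lemma full_row_rank_transpose_mult_vec_eq_0:
  fixes X :: "real mat"
  assumes X: "X \<in> carrier_mat n c" and rk: "vec_space.rank n X = n"
    and w: "w \<in> carrier_vec n" and Xw: "transpose_mat X *\<^sub>v w = 0\<^sub>v c"
  shows "w = 0\<^sub>v n"
proof -
  interpret vec_space "TYPE(real)" n .
  obtain S where S: "maximal S (\<lambda>T. T \<subseteq> set (cols X) \<and> lin_indpt T)"
    using max_lin_indpt_cols_exists[OF X] by blast
  have Ssub: "S \<subseteq> set (cols X)" and li: "lin_indpt S" using S unfolding maximal_def by auto
  have cols: "set (cols X) \<subseteq> carrier_vec n" using X cols_dim by blast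
  have "basis S"
    using dim_li_is_basis[OF fin_dim finite_subset[OF Ssub] _ li] Ssub cols
      rank_card_indpt[OF X S] rk dim_is_n by auto
  then have "w \<in> span (set (cols X))"
    using w span_is_monotone[OF Ssub] unfolding basis_def by auto
  moreover have "w \<in> orthogonal_complement (set (cols X))"
    unfolding orthogonal_complement_def
  proof (intro CollectI conjI ballI)
    fix v assume "v \<in> set (cols X)"
    then obtain j where j: "j < c" "v = col X j" using X by (auto simp: in_set_conv_nth)
    have "col X j \<bullet> w = 0" using arg_cong[OF Xw, of "\<lambda>z. z $ j"] X j by simp
    then show "w \<bullet> v = 0" using j X comm_scalar_prod[OF w, of v] by auto
  qed (rule w)
  ultimately have "w \<bullet> w = 0"
    using in_orthogonal_complement_span[OF cols] unfolding orthogonal_complement_def by auto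
  then show ?thesis using scalar_prod_self_eq_0_iff[OF w] by simp
qed

text \<open>Since v^T X^T X v = |X v|^2, the Gram matrix is singular only if X has a nontrivial kernel.\<close>
lemma det_gram_nonzero:
  fixes X :: "real mat"
  assumes X: "X \<in> carrier_mat r c"
    and ker: "\<And>v. v \<in> carrier_vec c \<Longrightarrow> X *\<^sub>v v = 0\<^sub>v r \<Longrightarrow> v = 0\<^sub>v c"
  shows "det (transpose_mat X * X) \<noteq> 0"
proof
  assume "det (transpose_mat X * X) = 0"
  then obtain v where v: "v \<in> carrier_vec c" "v \<noteq> 0\<^sub>v c" "(transpose_mat X * X) *\<^sub>v v = 0\<^sub>v c"
    using det_0_iff_vec_prod_zero_field[of "transpose_mat X * X" c] X by auto
  have Xv: "X *\<^sub>v v \<in> carrier_vec r" using X v by auto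
  have "(transpose_mat X *\<^sub>v (X *\<^sub>v v)) \<bullet> v = 0"
    using v assoc_mult_mat_vec[of "transpose_mat X" c r X c v] X by simp
  then have "(X *\<^sub>v v) \<bullet> (X *\<^sub>v v) = 0" using transpose_vec_mult_scalar[OF X v(1) Xv] by simp
  then show False using ker v Xv scalar_prod_self_eq_0_iff by blast
qed

lemma det_gram_transpose_nonzero:
  fixes X :: "real mat"
  assumes X: "X \<in> carrier_mat n c" and rk: "vec_space.rank n X = n"
  shows "det (X * transpose_mat X) \<noteq> 0"
  using det_gram_nonzero[of "transpose_mat X" c n] full_row_rank_transpose_mult_vec_eq_0[OF X rk] X
  by auto

lemma pinv_left_carrier:
  fixes X :: "real mat"
  assumes X: "X \<in> carrier_mat r c" and det: "det (transpose_mat X * X) \<noteq> 0"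
  shows "pinv_left X \<in> carrier_mat c r"
  using minv_mat(1)[OF _ det, of c] X unfolding pinv_left_def by auto

lemma pinv_left_mult:
  fixes X :: "real mat"
  assumes X: "X \<in> carrier_mat r c" and det: "det (transpose_mat X * X) \<noteq> 0"
  shows "pinv_left X * X = 1\<^sub>m c"
proof -
  have G: "transpose_mat X * X \<in> carrier_mat c c" using X by auto
  have "pinv_left X * X = minv (transpose_mat X * X) * (transpose_mat X * X)"
    unfolding pinv_left_def using minv_mat(1)[OF G det] X by (simp add: assoc_mult_mat[of _ c c _ r _ c])
  then show ?thesis using minv_mat(3)[OF G det] by simp
qed

lemma pinv_right_carrier:
  fixes X :: "real mat"
  assumes X: "X \<in> carrier_mat r c" and det: "det (X * transpose_mat X) \<noteq> 0"
  shows "pinv_right X \<in> carrier_mat c r"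
  using minv_mat(1)[OF _ det, of r] X unfolding pinv_right_def by auto

lemma mult_pinv_right:
  fixes X :: "real mat"
  assumes X: "X \<in> carrier_mat r c" and det: "det (X * transpose_mat X) \<noteq> 0"
  shows "X * pinv_right X = 1\<^sub>m r"
proof -
  have G: "X * transpose_mat X \<in> carrier_mat r r" using X by auto
  have "X * pinv_right X = (X * transpose_mat X) * minv (X * transpose_mat X)"
    unfolding pinv_right_def using minv_mat(1)[OF G det] X by (simp add: assoc_mult_mat[of _ r c _ c _ r])
  then show ?thesis using minv_mat(2)[OF G det] by simp
qed

section \<open>Variation of constants for a single mode\<close>

lemma vsum_carrier [simp]: "vsum d f S \<in> carrier_vec d"
  unfolding vsum_def by simp

lemma dim_vsum [simp]: "dim_vec (vsum d f S) = d"
  unfolding vsum_def by simp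

lemma vsum_cong: "(\<And>l. l \<in> S \<Longrightarrow> f l = g l) \<Longrightarrow> vsum d f S = vsum d g S"
  unfolding vsum_def by (intro eq_vecI) auto

lemma vsum_atLeastLessThan_Suc:
  assumes "k \<le> K" "f K \<in> carrier_vec d"
  shows "vsum d f {k..<Suc K} = vsum d f {k..<K} + f K"
proof -
  have "{k..<Suc K} = insert K {k..<K}" using assms by auto
  then show ?thesis unfolding vsum_def using assms by (intro eq_vecI) auto
qed

lemma mult_mat_vec_index:
  fixes M :: "real mat"
  assumes "M \<in> carrier_mat r d" "v \<in> carrier_vec d" "i < r"
  shows "(M *\<^sub>v v) $ i = (\<Sum>j<d. M $$ (i, j) * v $ j)"
  using assms by (auto simp: scalar_prod_def atLeast0LessThan intro!: sum.cong)

lemma mult_mat_vec_vsum: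
  fixes M :: "real mat"
  assumes M: "M \<in> carrier_mat r d" and f: "\<And>l. l \<in> S \<Longrightarrow> f l \<in> carrier_vec d"
  shows "M *\<^sub>v vsum d f S = vsum r (\<lambda>l. M *\<^sub>v f l) S"
proof (rule eq_vecI)
  fix i assume "i < dim_vec (vsum r (\<lambda>l. M *\<^sub>v f l) S)"
  then have i: "i < r" by simp
  have "(M *\<^sub>v vsum d f S) $ i = (\<Sum>j<d. M $$ (i, j) * (\<Sum>l\<in>S. f l $ j))"
    using M i by (simp add: scalar_prod_def vsum_def atLeast0LessThan)
  also have "\<dots> = (\<Sum>l\<in>S. \<Sum>j<d. M $$ (i, j) * f l $ j)"
    by (simp add: sum_distrib_left sum.swap[of _ S])
  also have "\<dots> = (\<Sum>l\<in>S. (M *\<^sub>v f l) $ i)"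
    using f by (intro sum.cong refl) (subst mult_mat_vec_index[OF M _ i], auto)
  finally show "(M *\<^sub>v vsum d f S) $ i = vsum r (\<lambda>l. M *\<^sub>v f l) S $ i" using i by (simp add: vsum_def)
qed (use M in simp)

text \<open>The zero-state response: the state at time k + a when the state at time k is zero.\<close>
definition forced_state :: "nat \<Rightarrow> real mat \<Rightarrow> real mat \<Rightarrow> (nat \<Rightarrow> real vec) \<Rightarrow> nat \<Rightarrow> nat \<Rightarrow> real vec"
  where "forced_state n A B u k a = vsum n (\<lambda>l. A ^\<^sub>m (k + a - l - 1) *\<^sub>v (B *\<^sub>v u l)) {k..<k + a}"

lemma forced_state_carrier [simp]: "forced_state n A B u k a \<in> carrier_vec n"
  unfolding forced_state_def by simp

lemma pow_mat_Suc_left: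
  fixes A :: "'a :: semiring_1 mat"
  assumes A: "A \<in> carrier_mat n n"
  shows "A ^\<^sub>m Suc k = A * A ^\<^sub>m k"
  using A by (induction k) (simp_all add: assoc_mult_mat[of _ n n _ n _ n])

lemma forced_state_Suc:
  fixes A B :: "real mat"
  assumes A: "A \<in> carrier_mat n n" and B: "B \<in> carrier_mat n m"
    and u: "\<And>l. k \<le> l \<Longrightarrow> l \<le> k + a \<Longrightarrow> u l \<in> carrier_vec m"
  shows "forced_state n A B u k (Suc a) = A *\<^sub>v forced_state n A B u k a + B *\<^sub>v u (k + a)"
proof -
  have "A *\<^sub>v forced_state n A B u k a = vsum n (\<lambda>l. A *\<^sub>v (A ^\<^sub>m (k + a - l - 1) *\<^sub>v (B *\<^sub>v u l))) {k..<k + a}"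
    unfolding forced_state_def using A B u by (intro mult_mat_vec_vsum) (auto intro!: carrier_vecI)
  also have "\<dots> = vsum n (\<lambda>l. A ^\<^sub>m (k + Suc a - l - 1) *\<^sub>v (B *\<^sub>v u l)) {k..<k + a}"
  proof (rule vsum_cong)
    fix l assume l: "l \<in> {k..<k + a}"
    then have "k + Suc a - l - 1 = Suc (k + a - l - 1)" by auto
    then show "A *\<^sub>v (A ^\<^sub>m (k + a - l - 1) *\<^sub>v (B *\<^sub>v u l)) = A ^\<^sub>m (k + Suc a - l - 1) *\<^sub>v (B *\<^sub>v u l)"
      using A B u[of l] l pow_mat_Suc_left[OF A] by (simp add: assoc_mult_mat_vec[of _ n n _ n])
  qed
  finally show ?thesis
    unfolding forced_state_def using A B u[of "k + a"]
    by (simp add: vsum_atLeastLessThan_Suc[of k "k + a", simplified])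
qed

lemma lti_state_eq:
  fixes A B :: "real mat" and x u :: "nat \<Rightarrow> real vec"
  assumes A: "A \<in> carrier_mat n n" and B: "B \<in> carrier_mat n m" and xk: "x k \<in> carrier_vec n"
    and step: "\<And>l. k \<le> l \<Longrightarrow> l < k + a \<Longrightarrow> u l \<in> carrier_vec m \<and> x (Suc l) = A *\<^sub>v x l + B *\<^sub>v u l"
  shows "x (k + a) = A ^\<^sub>m a *\<^sub>v x k + forced_state n A B u k a"
  using step
proof (induction a)
  case 0
  then show ?case using xk A by (simp add: forced_state_def vsum_def zero_vec_def[symmetric])
next
  case (Suc a)
  then have IH: "x (k + a) = A ^\<^sub>m a *\<^sub>v x k + forced_state n A B u k a"
    and u: "u (k + a) \<in> carrier_vec m" and x: "x (Suc (k + a)) = A *\<^sub>v x (k + a) + B *\<^sub>v u (k + a)"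
    by auto
  have Ax: "A ^\<^sub>m a *\<^sub>v x k \<in> carrier_vec n" using mult_mat_vec_carrier[OF pow_carrier_mat[OF A] xk] .
  have "x (k + Suc a) = A *\<^sub>v (A ^\<^sub>m a *\<^sub>v x k) + (A *\<^sub>v forced_state n A B u k a + B *\<^sub>v u (k + a))"
    using x IH A B Ax u by (simp add: mult_add_distrib_mat_vec[OF A] assoc_add_vec[of _ n])
  also have "A *\<^sub>v (A ^\<^sub>m a *\<^sub>v x k) = A ^\<^sub>m Suc a *\<^sub>v x k"
    unfolding pow_mat_Suc_left[OF A] using assoc_mult_mat_vec[OF A pow_carrier_mat[OF A] xk] by simp
  also have "A *\<^sub>v forced_state n A B u k a + B *\<^sub>v u (k + a) = forced_state n A B u k (Suc a)"
    using forced_state_Suc[OF A B] Suc.prems by simp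
  finally show ?case .
qed

section \<open>Observability and Toeplitz matrices\<close>

lemma obs_mat_carrier: "A \<in> carrier_mat n n \<Longrightarrow> obs_mat p q A C \<in> carrier_mat (Suc q * p) n"
  unfolding obs_mat_def by auto

lemma toep_mat_carrier: "toep_mat p m q A B C D \<in> carrier_mat (Suc q * p) (Suc q * m)"
  unfolding toep_mat_def by auto

lemma stack_carrier: "stack d q f k \<in> carrier_vec (Suc q * d)"
  unfolding stack_def by auto

lemma stack_index: "r < Suc q * d \<Longrightarrow> stack d q f k $ r = f (k + r div d) $ (r mod d)"
  unfolding stack_def by auto

lemma obs_mat_mult_vec_index:
  fixes A C :: "real mat"
  assumes A: "A \<in> carrier_mat n n" and C: "C \<in> carrier_mat p n" and r: "r < Suc q * p"
    and v: "v \<in> carrier_vec n"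
  shows "(obs_mat p q A C *\<^sub>v v) $ r = (C * A ^\<^sub>m (r div p) *\<^sub>v v) $ (r mod p)"
proof -
  have s: "r mod p < p" using r by (cases p) auto
  have CA: "C * A ^\<^sub>m (r div p) \<in> carrier_mat p n" using A C by auto
  show ?thesis
    unfolding mult_mat_vec_index[OF obs_mat_carrier[OF A] v r] mult_mat_vec_index[OF CA v s]
    using r A by (intro sum.cong refl) (simp add: obs_mat_def)
qed

lemma sum_lessThan_mult_blocks:
  fixes f :: "nat \<Rightarrow> 'a :: comm_monoid_add" and b m :: nat
  shows "(\<Sum>c<b * m. f c) = (\<Sum>i<b. \<Sum>j<m. f (i * m + j))"
proof -
  have "(\<Sum>c<b * m. f c) = (\<Sum>i<b. sum f {i * m..<i * m + m})" by (rule sum.nat_group[symmetric])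
  also have "\<dots> = (\<Sum>i<b. \<Sum>j<m. f (i * m + j))"
  proof (rule sum.cong[OF refl])
    fix i
    show "sum f {i * m..<i * m + m} = (\<Sum>j<m. f (i * m + j))"
      using sum.shift_bounds_nat_ivl[of f 0 "i * m" m] by (simp add: atLeast0LessThan add.commute)
  qed
  finally show ?thesis .
qed

lemma sum_lower_triangular_row:
  fixes X Y :: "nat \<Rightarrow> 'a :: comm_monoid_add"
  assumes "a < N"
  shows "(\<Sum>b<N. if a = b then X b else if b < a then Y b else 0) = X a + (\<Sum>b<a. Y b)"
proof -
  have "(\<Sum>b<N. if a = b then X b else if b < a then Y b else 0)
      = (\<Sum>b<N. if a = b then X b else 0) + (\<Sum>b<N. if b < a then Y b else 0)"
    by (subst sum.distrib[symmetric]) (intro sum.cong, auto)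
  also have "\<dots> = X a + (\<Sum>b\<in>{..<N} \<inter> {..<a}. Y b)"
    using assms by (simp add: sum.inter_restrict)
  also have "{..<N} \<inter> {..<a} = {..<a}" using assms by auto
  finally show ?thesis .
qed

lemma mult_forced_state_index:
  fixes A B C :: "real mat"
  assumes A: "A \<in> carrier_mat n n" and B: "B \<in> carrier_mat n m" and C: "C \<in> carrier_mat p n"
    and u: "\<And>b. b < a \<Longrightarrow> u (k + b) \<in> carrier_vec m" and s: "s < p"
  shows "(C *\<^sub>v forced_state n A B u k a) $ s = (\<Sum>b<a. (C * A ^\<^sub>m (a - b - 1) * B *\<^sub>v u (k + b)) $ s)"
proof -
  have "C *\<^sub>v forced_state n A B u k a = vsum p (\<lambda>l. C *\<^sub>v (A ^\<^sub>m (k + a - l - 1) *\<^sub>v (B *\<^sub>v u l))) {k..<k + a}"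
    unfolding forced_state_def using A by (intro mult_mat_vec_vsum[OF C]) (auto intro!: carrier_vecI)
  then have "(C *\<^sub>v forced_state n A B u k a) $ s
      = (\<Sum>l\<in>{k..<k + a}. (C *\<^sub>v (A ^\<^sub>m (k + a - l - 1) *\<^sub>v (B *\<^sub>v u l))) $ s)"
    using s by (simp add: vsum_def)
  also have "\<dots> = (\<Sum>b<a. (C *\<^sub>v (A ^\<^sub>m (k + a - (k + b) - 1) *\<^sub>v (B *\<^sub>v u (k + b)))) $ s)"
    by (rule sum.reindex_bij_witness[of _ "\<lambda>b. k + b" "\<lambda>l. l - k"]) auto
  also have "\<dots> = (\<Sum>b<a. (C * A ^\<^sub>m (a - b - 1) * B *\<^sub>v u (k + b)) $ s)"
  proof (rule sum.cong[OF refl])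
    fix b assume "b \<in> {..<a}"
    then have ub: "u (k + b) \<in> carrier_vec m" using u by simp
    have CA: "C * A ^\<^sub>m (a - b - 1) \<in> carrier_mat p n" using A C by auto
    have "C * A ^\<^sub>m (a - b - 1) * B *\<^sub>v u (k + b) = C * A ^\<^sub>m (a - b - 1) *\<^sub>v (B *\<^sub>v u (k + b))"
      using assoc_mult_mat_vec[OF CA B ub] .
    also have "\<dots> = C *\<^sub>v (A ^\<^sub>m (a - b - 1) *\<^sub>v (B *\<^sub>v u (k + b)))"
      using assoc_mult_mat_vec[OF C pow_carrier_mat[OF A], of "B *\<^sub>v u (k + b)"] B ub by simp
    finally show "(C *\<^sub>v (A ^\<^sub>m (k + a - (k + b) - 1) *\<^sub>v (B *\<^sub>v u (k + b)))) $ s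
        = (C * A ^\<^sub>m (a - b - 1) * B *\<^sub>v u (k + b)) $ s" by simp
  qed
  finally show ?thesis .
qed

lemma toep_mat_mult_stack_index:
  fixes A B C D :: "real mat"
  assumes A: "A \<in> carrier_mat n n" and B: "B \<in> carrier_mat n m" and C: "C \<in> carrier_mat p n"
    and D: "D \<in> carrier_mat p m" and u: "\<And>b. b \<le> q \<Longrightarrow> u (k + b) \<in> carrier_vec m"
    and r: "r < Suc q * p"
  shows "(toep_mat p m q A B C D *\<^sub>v stack m q u k) $ r
       = (D *\<^sub>v u (k + r div p) + C *\<^sub>v forced_state n A B u k (r div p)) $ (r mod p)"
proof -
  define a where "a = r div p"
  define s where "s = r mod p"
  have s: "s < p" using r by (cases p) (auto simp: s_def)
  have a: "a < Suc q" using r by (simp add: a_def less_mult_imp_div_less)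
  let ?M = "toep_mat p m q A B C D"
  let ?entry = "\<lambda>b. if a = b then (D *\<^sub>v u (k + b)) $ s
                   else if b < a then (C * A ^\<^sub>m (a - b - 1) * B *\<^sub>v u (k + b)) $ s else 0"
  have block: "(\<Sum>j<m. ?M $$ (r, b * m + j) * stack m q u k $ (b * m + j)) = ?entry b" if b: "b < Suc q" for b
  proof -
    have ub: "u (k + b) \<in> carrier_vec m" using u b by simp
    have "?M $$ (r, b * m + j) * stack m q u k $ (b * m + j)
        = (if a = b then D $$ (s, j) else if b < a then (C * A ^\<^sub>m (a - b - 1) * B) $$ (s, j) else 0)
          * u (k + b) $ j" if j: "j < m" for j
    proof -
      have "b * m + j < Suc b * m" using j by simp
      also have "\<dots> \<le> Suc q * m" using b by (intro mult_le_mono1) simp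
      finally have c: "b * m + j < Suc q * m" .
      then show ?thesis unfolding toep_mat_def stack_index[OF c] using r j by (simp add: a_def s_def Let_def)
    qed
    then have "(\<Sum>j<m. ?M $$ (r, b * m + j) * stack m q u k $ (b * m + j))
       = (\<Sum>j<m. (if a = b then D $$ (s, j) else if b < a then (C * A ^\<^sub>m (a - b - 1) * B) $$ (s, j) else 0)
          * u (k + b) $ j)"
      by (intro sum.cong) auto
    also have "\<dots> = ?entry b"
    proof -
      have "C * A ^\<^sub>m (a - b - 1) * B \<in> carrier_mat p m" using A B C by auto
      then show ?thesis using mult_mat_vec_index[OF D ub s] mult_mat_vec_index[OF _ ub s] by auto
    qed
    finally show ?thesis .
  qed
  have "(?M *\<^sub>v stack m q u k) $ r = (\<Sum>c<Suc q * m. ?M $$ (r, c) * stack m q u k $ c)"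
    by (rule mult_mat_vec_index[OF toep_mat_carrier stack_carrier r])
  also have "\<dots> = (\<Sum>b<Suc q. ?entry b)"
    unfolding sum_lessThan_mult_blocks using block by (intro sum.cong) auto
  also have "\<dots> = (D *\<^sub>v u (k + a)) $ s + (\<Sum>b<a. (C * A ^\<^sub>m (a - b - 1) * B *\<^sub>v u (k + b)) $ s)"
    by (rule sum_lower_triangular_row[OF a])
  also have "\<dots> = (D *\<^sub>v u (k + a) + C *\<^sub>v forced_state n A B u k a) $ s"
  proof -
    have "(C *\<^sub>v forced_state n A B u k a) $ s = (\<Sum>b<a. (C * A ^\<^sub>m (a - b - 1) * B *\<^sub>v u (k + b)) $ s)"
      by (rule mult_forced_state_index[OF A B C _ s]) (use u a in auto)
    then show ?thesis using s C D by simp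
  qed
  finally show ?thesis unfolding a_def s_def .
qed

lemma lti_output_minus_forced:
  fixes A B C D :: "real mat" and x u y :: "nat \<Rightarrow> real vec"
  assumes A: "A \<in> carrier_mat n n" and B: "B \<in> carrier_mat n m" and C: "C \<in> carrier_mat p n"
    and D: "D \<in> carrier_mat p m" and xk: "x k \<in> carrier_vec n"
    and step: "\<And>l. k \<le> l \<Longrightarrow> l < k + a \<Longrightarrow> u l \<in> carrier_vec m \<and> x (Suc l) = A *\<^sub>v x l + B *\<^sub>v u l"
    and ua: "u (k + a) \<in> carrier_vec m" and ya: "y (k + a) = C *\<^sub>v x (k + a) + D *\<^sub>v u (k + a)"
  shows "y (k + a) - D *\<^sub>v u (k + a) - C *\<^sub>v forced_state n A B u k a = C * A ^\<^sub>m a *\<^sub>v x k"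
proof (rule eq_vecI)
  have Ax: "A ^\<^sub>m a *\<^sub>v x k \<in> carrier_vec n" using mult_mat_vec_carrier[OF pow_carrier_mat[OF A] xk] .
  fix s assume "s < dim_vec (C * A ^\<^sub>m a *\<^sub>v x k)"
  then have s: "s < p" using C by simp
  have "x (k + a) = A ^\<^sub>m a *\<^sub>v x k + forced_state n A B u k a"
    by (rule lti_state_eq[where x=x and k=k, OF A B xk step])
  then have "C *\<^sub>v x (k + a) = C *\<^sub>v (A ^\<^sub>m a *\<^sub>v x k) + C *\<^sub>v forced_state n A B u k a"
    using mult_add_distrib_mat_vec[OF C Ax] by simp
  then show "(y (k + a) - D *\<^sub>v u (k + a) - C *\<^sub>v forced_state n A B u k a) $ s = (C * A ^\<^sub>m a *\<^sub>v x k) $ s"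
    unfolding ya using s C D Ax ua assoc_mult_mat_vec[OF C pow_carrier_mat[OF A] xk] by simp
qed (use C D in simp)

lemma stack_minus_toep_eq_obs:
  fixes A B C D :: "real mat" and x u y :: "nat \<Rightarrow> real vec"
  assumes A: "A \<in> carrier_mat n n" and B: "B \<in> carrier_mat n m" and C: "C \<in> carrier_mat p n"
    and D: "D \<in> carrier_mat p m" and xk: "x k \<in> carrier_vec n"
    and step: "\<And>l. k \<le> l \<Longrightarrow> l < k + q \<Longrightarrow> x (Suc l) = A *\<^sub>v x l + B *\<^sub>v u l"
    and out: "\<And>l. k \<le> l \<Longrightarrow> l \<le> k + q \<Longrightarrow> u l \<in> carrier_vec m \<and> y l = C *\<^sub>v x l + D *\<^sub>v u l"
  shows "stack p q y k - toep_mat p m q A B C D *\<^sub>v stack m q u k = obs_mat p q A C *\<^sub>v x k"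
proof (rule eq_vecI)
  fix r assume "r < dim_vec (obs_mat p q A C *\<^sub>v x k)"
  then have r: "r < Suc q * p" using obs_mat_carrier[OF A, of p q C] by simp
  define a where "a = r div p"
  have "a < Suc q" using r unfolding a_def by (rule less_mult_imp_div_less)
  then have a: "a \<le> q" by simp
  have s: "r mod p < p" using r by (cases p) auto
  have ya: "y (k + a) \<in> carrier_vec p" using out[of "k + a"] a D by (auto intro!: carrier_vecI)
  have "(stack p q y k - toep_mat p m q A B C D *\<^sub>v stack m q u k) $ r
      = y (k + a) $ (r mod p) - (toep_mat p m q A B C D *\<^sub>v stack m q u k) $ r"
    using r toep_mat_carrier[of p m q A B C D] by (simp add: stack_index a_def)
  also have "\<dots> = (y (k + a) - D *\<^sub>v u (k + a) - C *\<^sub>v forced_state n A B u k a) $ (r mod p)"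
  proof -
    have "(toep_mat p m q A B C D *\<^sub>v stack m q u k) $ r
        = (D *\<^sub>v u (k + a) + C *\<^sub>v forced_state n A B u k a) $ (r mod p)"
      unfolding a_def by (rule toep_mat_mult_stack_index[OF A B C D _ r]) (use out in auto)
    moreover have "u (k + a) \<in> carrier_vec m" using out a by auto
    ultimately show ?thesis using s ya C D by simp
  qed
  also have "\<dots> = (C * A ^\<^sub>m a *\<^sub>v x k) $ (r mod p)"
    by (subst lti_output_minus_forced[where x=x and k=k and a=a and u=u and y=y, OF A B C D xk]) (use step out a in auto)
  also have "\<dots> = (obs_mat p q A C *\<^sub>v x k) $ r"
    unfolding obs_mat_mult_vec_index[OF A C r xk] a_def ..
  finally show "(stack p q y k - toep_mat p m q A B C D *\<^sub>v stack m q u k) $ r = (obs_mat p q A C *\<^sub>v x k) $ r" .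
qed (use obs_mat_carrier[OF A, of p q C] toep_mat_carrier[of p m q A B C D] stack_carrier[of p q y k] in simp)

section \<open>The constructions on exact data\<close>

lemma xhat_eq_state:
  fixes Ah Bh Ch Dh :: "nat \<Rightarrow> real mat" and x u y :: "nat \<Rightarrow> real vec"
  assumes A: "Ah nu \<in> carrier_mat n n" and B: "Bh nu \<in> carrier_mat n m" and C: "Ch nu \<in> carrier_mat p n"
    and D: "Dh nu \<in> carrier_mat p m" and nu: "phi k = nu" and xk: "x k \<in> carrier_vec n"
    and step: "\<And>l. k \<le> l \<Longrightarrow> l < k + q \<Longrightarrow> x (Suc l) = Ah nu *\<^sub>v x l + Bh nu *\<^sub>v u l"
    and out: "\<And>l. k \<le> l \<Longrightarrow> l \<le> k + q \<Longrightarrow> u l \<in> carrier_vec m \<and> y l = Ch nu *\<^sub>v x l + Dh nu *\<^sub>v u l"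
    and det: "det (transpose_mat (obs_mat p q (Ah nu) (Ch nu)) * obs_mat p q (Ah nu) (Ch nu)) \<noteq> 0"
  shows "xhat p m q Ah Bh Ch Dh phi u y k = x k"
proof -
  let ?O = "obs_mat p q (Ah nu) (Ch nu)"
  have O: "?O \<in> carrier_mat (Suc q * p) n" by (rule obs_mat_carrier[OF A])
  have "xhat p m q Ah Bh Ch Dh phi u y k = pinv_left ?O *\<^sub>v (?O *\<^sub>v x k)"
    using stack_minus_toep_eq_obs[where x=x and k=k, OF A B C D xk step out] by (simp add: xhat_def nu)
  also have "\<dots> = (pinv_left ?O * ?O) *\<^sub>v x k"
    using assoc_mult_mat_vec[OF pinv_left_carrier[OF O det] O xk] by simp
  finally show ?thesis using pinv_left_mult[OF O det] xk by simp
qed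

lemma kappa_eq_state:
  fixes Ah Bh :: "nat \<Rightarrow> real mat" and x u :: "nat \<Rightarrow> real vec"
  assumes A: "Ah nu \<in> carrier_mat n n" and B: "Bh nu \<in> carrier_mat n m"
    and nu: "phi (ks (i - 1)) = nu" and lt: "ks (i - 1) < ks i"
    and xk: "x (ks (i - 1)) \<in> carrier_vec n"
    and xhat: "xhat p m q Ah Bh Ch Dh phi u y (ks (i - 1)) = x (ks (i - 1))"
    and step: "\<And>l. ks (i - 1) \<le> l \<Longrightarrow> l < ks i \<Longrightarrow> u l \<in> carrier_vec m \<and> x (Suc l) = Ah nu *\<^sub>v x l + Bh nu *\<^sub>v u l"
  shows "kappa n p m q Ah Bh Ch Dh phi u y ks i = x (ks i)"
proof -
  define k where "k = ks (i - 1)"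
  define a where "a = ks i - k"
  have ki: "ks i = k + a" and iv: "{k..ks i - 1} = {k..<k + a}" using lt by (auto simp: a_def k_def)
  have "x (k + a) = Ah nu ^\<^sub>m a *\<^sub>v x k + forced_state n (Ah nu) (Bh nu) u k a"
    by (rule lti_state_eq[where x=x and k=k, OF A B]) (use xk step ki in \<open>auto simp: k_def\<close>)
  then show ?thesis
    using nu xhat iv unfolding kappa_def Let_def k_def[symmetric] ki forced_state_def by simp
qed

lemma zeta_eq_output_minus_forced:
  fixes Ah Bh Ch Dh :: "nat \<Rightarrow> real mat"
  assumes A: "Ah mu \<in> carrier_mat n n" and B: "Bh mu \<in> carrier_mat n m" and C: "Ch mu \<in> carrier_mat p n"
    and mu: "phi (ks i) = mu" and k1: "1 \<le> ks i"
  shows "zeta p Ah Bh Ch Dh phi u y ks i (ks i + a)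
    = y (ks i + a) - Dh mu *\<^sub>v u (ks i + a) - Ch mu *\<^sub>v forced_state n (Ah mu) (Bh mu) u (ks i) a"
proof -
  have "{ks i..ks i + a - 1} = {ks i..<ks i + a}" using k1 by auto
  moreover have "Ch mu *\<^sub>v forced_state n (Ah mu) (Bh mu) u (ks i) a
      = vsum p (\<lambda>l. Ch mu *\<^sub>v (Ah mu ^\<^sub>m (ks i + a - l - 1) *\<^sub>v (Bh mu *\<^sub>v u l))) {ks i..<ks i + a}"
    unfolding forced_state_def using A by (intro mult_mat_vec_vsum[OF C]) (auto intro!: carrier_vecI)
  ultimately show ?thesis unfolding zeta_def Let_def mu by simp
qed

lemma Zvec_eq_obs:
  fixes Ah Bh Ch Dh :: "nat \<Rightarrow> real mat" and x u y :: "nat \<Rightarrow> real vec"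
  assumes A: "Ah mu \<in> carrier_mat n n" and B: "Bh mu \<in> carrier_mat n m" and C: "Ch mu \<in> carrier_mat p n"
    and D: "Dh mu \<in> carrier_mat p m" and mu: "phi (ks i) = mu" and k1: "1 \<le> ks i"
    and xk: "x (ks i) \<in> carrier_vec n"
    and step: "\<And>l. ks i \<le> l \<Longrightarrow> l < ks i + q \<Longrightarrow> x (Suc l) = Ah mu *\<^sub>v x l + Bh mu *\<^sub>v u l"
    and out: "\<And>l. ks i \<le> l \<Longrightarrow> l \<le> ks i + q \<Longrightarrow> u l \<in> carrier_vec m \<and> y l = Ch mu *\<^sub>v x l + Dh mu *\<^sub>v u l"
  shows "Zvec p q Ah Bh Ch Dh phi u y ks i = obs_mat p q (Ah mu) (Ch mu) *\<^sub>v x (ks i)"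
proof (rule eq_vecI)
  fix r assume "r < dim_vec (obs_mat p q (Ah mu) (Ch mu) *\<^sub>v x (ks i))"
  then have r: "r < Suc q * p" using obs_mat_carrier[OF A, of p q "Ch mu"] by simp
  define a where "a = r div p"
  have "a < Suc q" using r unfolding a_def by (rule less_mult_imp_div_less)
  then have a: "a \<le> q" by simp
  have "Zvec p q Ah Bh Ch Dh phi u y ks i $ r = zeta p Ah Bh Ch Dh phi u y ks i (ks i + a) $ (r mod p)"
    unfolding Zvec_def using r by (simp add: stack_index a_def)
  also have "\<dots> = (Ch mu * Ah mu ^\<^sub>m a *\<^sub>v x (ks i)) $ (r mod p)"
    unfolding zeta_eq_output_minus_forced[where Ah=Ah and Bh=Bh and Ch=Ch and Dh=Dh and mu=mu and u=u and y=y
      and phi=phi and ks=ks and i=i and a=a, OF A B C mu k1]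
    by (subst lti_output_minus_forced[where x=x and k="ks i" and a=a and u=u and y=y, OF A B C D xk])
      (use step out a in auto)
  also have "\<dots> = (obs_mat p q (Ah mu) (Ch mu) *\<^sub>v x (ks i)) $ r"
    unfolding obs_mat_mult_vec_index[OF A C r xk] a_def ..
  finally show "Zvec p q Ah Bh Ch Dh phi u y ks i $ r = (obs_mat p q (Ah mu) (Ch mu) *\<^sub>v x (ks i)) $ r" .
qed (use obs_mat_carrier[OF A, of p q "Ch mu"] in \<open>simp add: Zvec_def stack_def\<close>)

lemma mult_mat_of_cols:
  fixes M :: "'a :: comm_semiring_0 mat"
  assumes M: "M \<in> carrier_mat r n" and vs: "set vs \<subseteq> carrier_vec n"
  shows "M * mat_of_cols n vs = mat_of_cols r (map (\<lambda>v. M *\<^sub>v v) vs)"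
proof (rule eq_matI)
  fix i j assume "i < dim_row (mat_of_cols r (map (\<lambda>v. M *\<^sub>v v) vs))"
    and "j < dim_col (mat_of_cols r (map (\<lambda>v. M *\<^sub>v v) vs))"
  then have ij: "i < r" "j < length vs" by auto
  then have "col (mat_of_cols n vs) j = vs ! j" using vs by (intro col_mat_of_cols) auto
  then show "(M * mat_of_cols n vs) $$ (i, j) = mat_of_cols r (map (\<lambda>v. M *\<^sub>v v) vs) $$ (i, j)"
    using ij M by (simp add: mat_of_cols_index)
qed (use M in simp_all)

text \<open>The pseudo-inverses are one-sided inverses of O and Psi, so they cancel in
  O^dagger (O N Psi) Psi^dagger.\<close>
lemma Ups_step_eqI:
  fixes Ah Bh Ch Dh :: "nat \<Rightarrow> real mat" and N :: "real mat" and ks :: "nat \<Rightarrow> nat" and istar p t :: nat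
  defines "q \<equiv> dstar ks istar - 1"
  defines "Ob \<equiv> obs_mat p q (Ah (Suc t)) (Ch (Suc t))"
  assumes A: "Ah (Suc t) \<in> carrier_mat n n" and N: "N \<in> carrier_mat n n"
    and det: "det (transpose_mat Ob * Ob) \<noteq> 0"
    and rk: "vec_space.rank n (Psi_mat n p m Ah Bh Ch Dh phi u y ks istar t (Suc t)) = n"
    and kappa: "\<And>i. i \<in> trans_idx phi ks istar t (Suc t) \<Longrightarrow> kappa n p m q Ah Bh Ch Dh phi u y ks i \<in> carrier_vec n"
    and Zvec: "\<And>i. i \<in> trans_idx phi ks istar t (Suc t) \<Longrightarrow>
        Zvec p q Ah Bh Ch Dh phi u y ks i = (Ob * N) *\<^sub>v kappa n p m q Ah Bh Ch Dh phi u y ks i"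
  shows "Ups_step n p m Ah Bh Ch Dh phi u y ks istar t = N"
proof -
  let ?L = "sorted_list_of_set (trans_idx phi ks istar t (Suc t))"
  let ?k = "kappa n p m q Ah Bh Ch Dh phi u y ks"
  let ?P = "Psi_mat n p m Ah Bh Ch Dh phi u y ks istar t (Suc t)"
  have setL: "set ?L = trans_idx phi ks istar t (Suc t)" unfolding trans_idx_def by simp
  have P_def: "?P = mat_of_cols n (map ?k ?L)" unfolding Psi_mat_def q_def ..
  have P: "?P \<in> carrier_mat n (length ?L)"
    unfolding P_def by (rule mat_of_cols_carrier(1)[of n "map ?k ?L", unfolded length_map])
  have Ob: "Ob \<in> carrier_mat (Suc q * p) n" unfolding Ob_def by (rule obs_mat_carrier[OF A])
  have detP: "det (?P * transpose_mat ?P) \<noteq> 0" by (rule det_gram_transpose_nonzero[OF P rk])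
  have "map (Zvec p q Ah Bh Ch Dh phi u y ks) ?L = map (\<lambda>v. (Ob * N) *\<^sub>v v) (map ?k ?L)"
    using Zvec setL by auto
  then have "Zcal_mat p Ah Bh Ch Dh phi u y ks istar t (Suc t) = mat_of_cols (Suc q * p) (map (\<lambda>v. (Ob * N) *\<^sub>v v) (map ?k ?L))"
    by (simp only: Zcal_mat_def q_def[symmetric])
  also have "\<dots> = (Ob * N) * ?P"
    unfolding P_def using Ob N kappa setL by (intro mult_mat_of_cols[symmetric]) auto
  finally have Z: "Zcal_mat p Ah Bh Ch Dh phi u y ks istar t (Suc t) = Ob * N * ?P" .
  have "Ups_step n p m Ah Bh Ch Dh phi u y ks istar t = pinv_left Ob * (Ob * N * ?P) * pinv_right ?P"
    unfolding Ups_step_def Z Ob_def q_def ..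
  also have "\<dots> = (pinv_left Ob * Ob) * ((N * ?P) * pinv_right ?P)"
  proof -
    note PL = pinv_left_carrier[OF Ob det] and PR = pinv_right_carrier[OF P detP]
    have NP: "N * ?P \<in> carrier_mat n (length ?L)" using N P by simp
    have "pinv_left Ob * (Ob * N * ?P) = (pinv_left Ob * Ob) * (N * ?P)"
      using assoc_mult_mat[OF Ob N P] assoc_mult_mat[OF PL Ob NP] by simp
    then show ?thesis using assoc_mult_mat[OF mult_carrier_mat[OF PL Ob] NP PR] by simp
  qed
  also have "\<dots> = N"
    using pinv_left_mult[OF Ob det] mult_pinv_right[OF P detP] N P
      assoc_mult_mat[OF N P pinv_right_carrier[OF P detP]] by simp
  finally show ?thesis .
qed

section \<open>Change of state coordinates\<close>

lemma mult_inverse_cancel_mat: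
  fixes X M N Y :: "'a :: semiring_1 mat"
  assumes X: "X \<in> carrier_mat r n" and M: "M \<in> carrier_mat n n" and N: "N \<in> carrier_mat n n"
    and Y: "Y \<in> carrier_mat n c" and MN: "M * N = 1\<^sub>m n"
  shows "(X * M) * (N * Y) = X * Y"
proof -
  have "(X * M) * (N * Y) = X * ((M * N) * Y)"
    using X M N Y by (simp add: assoc_mult_mat[of _ r n _ n _ c] assoc_mult_mat[of _ n n _ n _ c])
  then show ?thesis using MN Y by simp
qed

lemma obs_mat_similar:
  fixes A C T Ti :: "real mat"
  assumes A: "A \<in> carrier_mat n n" and C: "C \<in> carrier_mat p n" and T: "T \<in> carrier_mat n n"
    and Ti: "Ti \<in> carrier_mat n n" and TTi: "T * Ti = 1\<^sub>m n" and TiT: "Ti * T = 1\<^sub>m n"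
  shows "obs_mat p q (Ti * A * T) (C * T) = obs_mat p q A C * T"
proof (rule eq_matI)
  fix r c assume r: "r < dim_row (obs_mat p q A C * T)" and c: "c < dim_col (obs_mat p q A C * T)"
  let ?a = "r div p" and ?s = "r mod p"
  have rc: "r < Suc q * p" "c < n" using r c obs_mat_carrier[OF A, of p q C] T by auto
  have s: "?s < p" using rc by (cases p) auto
  have "similar_mat_wit (Ti * A * T) A Ti T"
    unfolding similar_mat_wit_def Let_def using A T Ti TTi TiT by auto
  then have "(C * T) * (Ti * A * T) ^\<^sub>m ?a = (C * T) * (Ti * A ^\<^sub>m ?a * T)"
    by (simp add: similar_mat_wit_pow_id)
  also have "\<dots> = C * A ^\<^sub>m ?a * T"
  proof -
    have AT: "A ^\<^sub>m ?a * T \<in> carrier_mat n n" using mult_carrier_mat[OF pow_carrier_mat[OF A] T] .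
    have "Ti * A ^\<^sub>m ?a * T = Ti * (A ^\<^sub>m ?a * T)" using assoc_mult_mat[OF Ti pow_carrier_mat[OF A] T] .
    then show ?thesis
      using mult_inverse_cancel_mat[OF C T Ti AT TTi] assoc_mult_mat[OF C pow_carrier_mat[OF A] T] by simp
  qed
  finally have pow: "(C * T) * (Ti * A * T) ^\<^sub>m ?a = C * A ^\<^sub>m ?a * T" .
  have CA: "C * A ^\<^sub>m ?a \<in> carrier_mat p n" using mult_carrier_mat[OF C pow_carrier_mat[OF A]] .
  have O: "obs_mat p q A C \<in> carrier_mat (Suc q * p) n" by (rule obs_mat_carrier[OF A])
  have "row (obs_mat p q A C) r = row (C * A ^\<^sub>m ?a) ?s"
  proof (rule eq_vecI)
    fix i assume "i < dim_vec (row (C * A ^\<^sub>m ?a) ?s)"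
    then have i: "i < n" using carrier_matD(2)[OF CA] by (metis index_row(2))
    have "row (obs_mat p q A C) r $ i = obs_mat p q A C $$ (r, i)" using rc i O by simp
    also have "\<dots> = (C * A ^\<^sub>m ?a) $$ (?s, i)"
      unfolding obs_mat_def using rc i A by (simp del: index_mult_mat)
    also have "\<dots> = row (C * A ^\<^sub>m ?a) ?s $ i" using i s CA by (simp del: index_mult_mat)
    finally show "row (obs_mat p q A C) r $ i = row (C * A ^\<^sub>m ?a) ?s $ i" .
  qed (use CA O rc A in simp)
  then show "obs_mat p q (Ti * A * T) (C * T) $$ (r, c) = (obs_mat p q A C * T) $$ (r, c)"
    using rc s A C T pow by (simp add: obs_mat_def)
qed (use obs_mat_carrier[OF A, of p q C] obs_mat_carrier[OF mult_carrier_mat[OF mult_carrier_mat[OF Ti A] T], of p q "C * T"] T in auto)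

lemma obs_mat_kernel_trivial:
  fixes A C :: "real mat"
  assumes A: "A \<in> carrier_mat n n" and C: "C \<in> carrier_mat p n" and n: "n \<ge> 1" and q: "n - 1 \<le> q"
    and rk: "vec_space.rank (n * p) (obs_mat p (n - 1) A C) = n"
    and w: "w \<in> carrier_vec n" and Ow: "obs_mat p q A C *\<^sub>v w = 0\<^sub>v (Suc q * p)"
  shows "w = 0\<^sub>v n"
proof -
  have O: "obs_mat p (n - 1) A C \<in> carrier_mat (n * p) n" using obs_mat_carrier[OF A, of p "n - 1" C] n by simp
  have "obs_mat p (n - 1) A C *\<^sub>v w = 0\<^sub>v (n * p)"
  proof (rule eq_vecI)
    fix r assume "r < dim_vec (0\<^sub>v (n * p) :: real vec)"
    then have r: "r < Suc (n - 1) * p" using n by simp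
    have "Suc (n - 1) * p \<le> Suc q * p" using q by (intro mult_le_mono1) simp
    then have rq: "r < Suc q * p" using r by linarith
    have "(obs_mat p (n - 1) A C *\<^sub>v w) $ r = (obs_mat p q A C *\<^sub>v w) $ r"
      unfolding obs_mat_mult_vec_index[OF A C r w] obs_mat_mult_vec_index[OF A C rq w] ..
    then show "(obs_mat p (n - 1) A C *\<^sub>v w) $ r = 0\<^sub>v (n * p) $ r" using Ow rq r n by simp
  qed (use O in simp)
  then show ?thesis by (rule vec_space.full_col_rank_mult_vec_eq_0[OF O rk w])
qed

text \<open>Observability survives a change of state coordinates, and a horizon of q + 1 \<ge> n blocks
  already sees the whole state; so the Gram matrix of the estimated observability matrix
  is nonsingular.\<close>
lemma det_gram_obs_similar:
  fixes A C T Ti :: "real mat"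
  assumes A: "A \<in> carrier_mat n n" and C: "C \<in> carrier_mat p n" and T: "T \<in> carrier_mat n n"
    and Ti: "Ti \<in> carrier_mat n n" and TTi: "T * Ti = 1\<^sub>m n" and TiT: "Ti * T = 1\<^sub>m n"
    and n: "n \<ge> 1" and q: "n - 1 \<le> q"
    and rk: "vec_space.rank (n * p) (obs_mat p (n - 1) A C) = n"
  shows "det (transpose_mat (obs_mat p q (Ti * A * T) (C * T)) * obs_mat p q (Ti * A * T) (C * T)) \<noteq> 0"
proof (rule det_gram_nonzero)
  show "obs_mat p q (Ti * A * T) (C * T) \<in> carrier_mat (Suc q * p) n"
    using obs_mat_carrier[of "Ti * A * T" n] A T Ti by simp
  fix v :: "real vec" assume v: "v \<in> carrier_vec n"
    and Ov: "obs_mat p q (Ti * A * T) (C * T) *\<^sub>v v = 0\<^sub>v (Suc q * p)"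
  have "obs_mat p q A C *\<^sub>v (T *\<^sub>v v) = 0\<^sub>v (Suc q * p)"
    using Ov obs_mat_similar[OF A C T Ti TTi TiT, of q]
      assoc_mult_mat_vec[OF obs_mat_carrier[OF A] T v] by simp
  then have "T *\<^sub>v v = 0\<^sub>v n" using obs_mat_kernel_trivial[OF A C n q rk] T v by simp
  then have "Ti *\<^sub>v (T *\<^sub>v v) = 0\<^sub>v n" using Ti by (intro eq_vecI) auto
  then show "v = 0\<^sub>v n" using assoc_mult_mat_vec[OF Ti T v] TiT v by simp
qed

lemma similar_state_update:
  fixes A B T Ti :: "real mat"
  assumes A: "A \<in> carrier_mat n n" and B: "B \<in> carrier_mat n m"
    and T: "T \<in> carrier_mat n n" and Ti: "Ti \<in> carrier_mat n n" and TTi: "T * Ti = 1\<^sub>m n"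
    and x: "x \<in> carrier_vec n" and u: "u \<in> carrier_vec m"
  shows "Ti *\<^sub>v (A *\<^sub>v x + B *\<^sub>v u) = (Ti * A * T) *\<^sub>v (Ti *\<^sub>v x) + (Ti * B) *\<^sub>v u"
proof -
  have Tix: "Ti *\<^sub>v x \<in> carrier_vec n" using Ti x by simp
  have "(Ti * A * T) *\<^sub>v (Ti *\<^sub>v x) = Ti *\<^sub>v (A *\<^sub>v (T *\<^sub>v (Ti *\<^sub>v x)))"
    using assoc_mult_mat_vec[OF mult_carrier_mat[OF Ti A] T Tix] assoc_mult_mat_vec[OF Ti A] T Tix by simp
  also have "T *\<^sub>v (Ti *\<^sub>v x) = x" using assoc_mult_mat_vec[OF T Ti x, symmetric] TTi x by simp
  finally show ?thesis using A B x u Ti by (simp add: mult_add_distrib_mat_vec[OF Ti])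
qed

lemma similar_output_map:
  fixes C T Ti :: "real mat"
  assumes C: "C \<in> carrier_mat p n" and T: "T \<in> carrier_mat n n" and Ti: "Ti \<in> carrier_mat n n"
    and TTi: "T * Ti = 1\<^sub>m n" and x: "x \<in> carrier_vec n"
  shows "C *\<^sub>v x = (C * T) *\<^sub>v (Ti *\<^sub>v x)"
  using assoc_mult_mat_vec[OF T Ti x, symmetric] TTi x C T Ti by simp

lemma lss_state_carrier:
  assumes AB: "\<And>k. A (phi k) \<in> carrier_mat n n \<and> B (phi k) \<in> carrier_mat n m"
    and u: "\<And>k. u k \<in> carrier_vec m" and x0: "x0 \<in> carrier_vec n"
  shows "lss_state A B phi u x0 k \<in> carrier_vec n"
proof (induction k)
  case (Suc k)
  then show ?case using AB[of k] u[of k] by auto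
qed (use x0 in simp)

lemma lss_state_similar:
  fixes A B Ac Bc :: "nat \<Rightarrow> real mat" and S T :: "real mat"
  assumes S: "S \<in> carrier_mat n n" and T: "T \<in> carrier_mat n n" and TS: "T * S = 1\<^sub>m n"
    and AB: "\<And>k. A (phi k) \<in> carrier_mat n n \<and> B (phi k) \<in> carrier_mat n m"
    and AcBc: "\<And>k. Ac (phi k) = S * A (phi k) * T \<and> Bc (phi k) = S * B (phi k)"
    and u: "\<And>k. u k \<in> carrier_vec m" and x0: "x0 \<in> carrier_vec n"
  shows "lss_state Ac Bc phi u (S *\<^sub>v x0) k = S *\<^sub>v lss_state A B phi u x0 k"
proof (induction k)
  case (Suc k)
  have A: "A (phi k) \<in> carrier_mat n n" and B: "B (phi k) \<in> carrier_mat n m" using AB[of k] by auto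
  have x: "lss_state A B phi u x0 k \<in> carrier_vec n"
    by (rule lss_state_carrier[where A=A and B=B and phi=phi, OF AB u x0])
  show ?case using Suc AcBc[of k] similar_state_update[OF A B T S TS x u[of k]] by simp
qed simp

lemma lss_output_similar:
  fixes A B C D Ac Bc Cc Dc :: "nat \<Rightarrow> real mat" and S T :: "real mat"
  assumes S: "S \<in> carrier_mat n n" and T: "T \<in> carrier_mat n n" and TS: "T * S = 1\<^sub>m n"
    and ABC: "\<And>k. A (phi k) \<in> carrier_mat n n \<and> B (phi k) \<in> carrier_mat n m \<and> C (phi k) \<in> carrier_mat p n"
    and hat: "\<And>k. Ac (phi k) = S * A (phi k) * T \<and> Bc (phi k) = S * B (phi k)
                \<and> Cc (phi k) = C (phi k) * T \<and> Dc (phi k) = D (phi k)"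
    and u: "\<And>k. u k \<in> carrier_vec m" and x0: "x0 \<in> carrier_vec n"
  shows "lss_output Ac Bc Cc Dc phi u (S *\<^sub>v x0) k = lss_output A B C D phi u x0 k"
proof -
  have AB: "\<And>k. A (phi k) \<in> carrier_mat n n \<and> B (phi k) \<in> carrier_mat n m" using ABC by auto
  have x: "lss_state A B phi u x0 k \<in> carrier_vec n"
    by (rule lss_state_carrier[where A=A and B=B and phi=phi, OF AB u x0])
  have C: "C (phi k) \<in> carrier_mat p n" using ABC by auto
  have "lss_state Ac Bc phi u (S *\<^sub>v x0) k = S *\<^sub>v lss_state A B phi u x0 k"
    by (rule lss_state_similar[where A=A and B=B and phi=phi, OF S T TS AB _ u x0]) (use hat in auto)
  then show ?thesis
    unfolding lss_output_def using hat[of k] similar_output_map[OF C T S TS x] by auto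
qed

lemma foldl_similar:
  fixes A Ac :: "nat \<Rightarrow> real mat" and S T M :: "real mat"
  assumes S: "S \<in> carrier_mat n n" and T: "T \<in> carrier_mat n n" and TS: "T * S = 1\<^sub>m n"
    and A: "\<And>j. j \<in> set js \<Longrightarrow> A j \<in> carrier_mat n n \<and> Ac j = S * A j * T"
    and M: "M \<in> carrier_mat n m"
  shows "foldl (\<lambda>M j. Ac j * M) (S * M) js = S * foldl (\<lambda>M j. A j * M) M js
       \<and> foldl (\<lambda>M j. A j * M) M js \<in> carrier_mat n m"
  using A M
proof (induction js arbitrary: M)
  case (Cons j js M)
  then have Aj: "A j \<in> carrier_mat n n" and Acj: "Ac j = S * A j * T" by auto
  have "Ac j * (S * M) = (S * A j) * (T * (S * M))"
    unfolding Acj using S T Aj Cons.prems by (simp add: assoc_mult_mat[of _ n n _ n _ m])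
  also have "\<dots> = S * (A j * M)"
    using assoc_mult_mat[OF T S Cons.prems(2)] TS Cons.prems(2) assoc_mult_mat[OF S Aj Cons.prems(2)] by simp
  finally show ?case using Cons.IH[of "A j * M"] Cons.prems Aj by simp
qed simp

lemma markov_similar:
  fixes A B C D Ac Bc Cc Dc :: "nat \<Rightarrow> real mat" and S T :: "real mat"
  assumes S: "S \<in> carrier_mat n n" and T: "T \<in> carrier_mat n n" and TS: "T * S = 1\<^sub>m n"
    and ABC: "\<And>j. j \<in> set w \<Longrightarrow> A j \<in> carrier_mat n n \<and> B j \<in> carrier_mat n m \<and> C j \<in> carrier_mat p n"
    and hat: "\<And>j. j \<in> set w \<Longrightarrow> Ac j = S * A j * T \<and> Bc j = S * B j \<and> Cc j = C j * T \<and> Dc j = D j"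
  shows "markov Ac Bc Cc Dc w = markov A B C D w"
proof -
  consider "w = []" | j where "w = [j]" | j0 j1 v where "w = j0 # j1 # v" by (metis list.exhaust)
  then show ?thesis
  proof cases
    case 3
    let ?js = "butlast (j1 # v)" and ?l = "last (j1 # v)"
    have l: "?l \<in> set w" and js: "set ?js \<subseteq> set w" and j0: "j0 \<in> set w"
      using 3 by (auto dest: in_set_butlastD)
    have fold: "foldl (\<lambda>M j. Ac j * M) (S * B j0) ?js = S * foldl (\<lambda>M j. A j * M) (B j0) ?js
       \<and> foldl (\<lambda>M j. A j * M) (B j0) ?js \<in> carrier_mat n m"
      using foldl_similar[OF S T TS, of ?js A Ac "B j0" m] ABC hat js j0 by blast
    have "markov Ac Bc Cc Dc w = (C ?l * T) * (S * foldl (\<lambda>M j. A j * M) (B j0) ?js)"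
      using 3 hat[OF l] hat[OF j0] fold by simp
    also have "\<dots> = C ?l * foldl (\<lambda>M j. A j * M) (B j0) ?js"
      using mult_inverse_cancel_mat[OF _ T S _ TS] ABC[OF l] fold by blast
    also have "\<dots> = markov A B C D w" using 3 by simp
    finally show ?thesis .
  qed (use hat in auto)
qed

lemma Ups_chain_telescope:
  fixes U T :: "nat \<Rightarrow> real mat"
  assumes T: "\<And>j. j \<in> {1..s} \<Longrightarrow> T j \<in> carrier_mat n n \<and> invertible_mat (T j)"
    and U: "\<And>t. t \<in> {1..s - 1} \<Longrightarrow> U t = minv (T (Suc t)) * T t"
    and mu: "mu \<in> {1..s}"
  shows "Ups_chain n U mu = minv (T 1) * T mu"
  using mu
proof (induction mu)
  case (Suc mu)
  have inv: "minv (T j) \<in> carrier_mat n n \<and> T j * minv (T j) = 1\<^sub>m n \<and> minv (T j) * T j = 1\<^sub>m n"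
    if "j \<in> {1..s}" for j
    using minv_invertible_mat[of "T j" n] T[OF that] by auto
  show ?case
  proof (cases "mu = 0")
    case True
    then show ?thesis using inv[of 1] Suc.prems by (simp add: Ups_chain_def)
  next
    case False
    then have mu: "mu \<in> {1..s}" "Suc mu \<in> {1..s}" "mu \<in> {1..s - 1}" using Suc.prems by auto
    have T1: "minv (T 1) \<in> carrier_mat n n" using inv[of 1] mu by auto
    have Tmu: "T mu \<in> carrier_mat n n" "minv (T mu) \<in> carrier_mat n n" "T mu * minv (T mu) = 1\<^sub>m n"
      using T[OF mu(1)] inv[OF mu(1)] by auto
    have TSmu: "T (Suc mu) \<in> carrier_mat n n" "minv (T (Suc mu)) \<in> carrier_mat n n"
      "minv (T (Suc mu)) * T (Suc mu) = 1\<^sub>m n"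
      using T[OF mu(2)] inv[OF mu(2)] by auto
    have "minv (U mu) = minv (T mu) * T (Suc mu)"
      unfolding U[OF mu(3)] using Tmu TSmu mult_inverse_cancel_mat[OF TSmu(2) Tmu(1,2) TSmu(1) Tmu(3)]
      by (intro minv_eqI[of _ n]) auto
    moreover have "Ups_chain n U (Suc mu) = Ups_chain n U mu * minv (U mu)"
      using False by (simp add: Ups_chain_def)
    ultimately show ?thesis
      using Suc.IH mu(1) mult_inverse_cancel_mat[OF T1 Tmu(1,2) TSmu(1) Tmu(3)] by simp
  qed
qed simp

lemma rebase_estimate:
  fixes A B C T T1 :: "real mat"
  assumes A: "A \<in> carrier_mat n n" and B: "B \<in> carrier_mat n m" and C: "C \<in> carrier_mat p n"
    and T: "T \<in> carrier_mat n n" "invertible_mat T" and T1: "T1 \<in> carrier_mat n n" "invertible_mat T1"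
  defines "U \<equiv> minv T1 * T"
  shows "U * (minv T * A * T) * minv U = minv T1 * A * T1"
    and "U * (minv T * B) = minv T1 * B"
    and "C * T * minv U = C * T1"
proof -
  note Ti = minv_invertible_mat[OF T] and T1i = minv_invertible_mat[OF T1]
  have Ui: "minv U = minv T * T1"
    unfolding U_def using T Ti T1 T1i by (intro minv_eqI[of _ n]) (auto simp: mult_inverse_cancel_mat)
  have AT: "A * T \<in> carrier_mat n n" "minv T1 * A \<in> carrier_mat n n" using A T T1i by auto
  have "U * (minv T * A * T) = minv T1 * (A * T)"
    unfolding U_def using mult_inverse_cancel_mat[OF T1i(1) T(1) Ti(1) AT(1) Ti(2)] Ti(1) A T(1)
    by (simp add: assoc_mult_mat[of _ n n _ n _ n])
  then show "U * (minv T * A * T) * minv U = minv T1 * A * T1"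
    unfolding Ui using mult_inverse_cancel_mat[OF AT(2) T(1) Ti(1) T1(1) Ti(2)] T1i(1) A T(1)
    by (simp add: assoc_mult_mat[of _ n n _ n _ n])
  show "U * (minv T * B) = minv T1 * B"
    unfolding U_def by (rule mult_inverse_cancel_mat[OF T1i(1) T(1) Ti(1) B Ti(2)])
  show "C * T * minv U = C * T1"
    unfolding Ui by (rule mult_inverse_cancel_mat[OF C T(1) Ti(1) T1(1) Ti(2)])
qed

section \<open>Identification from one experiment\<close>

locale lss_experiment =
  fixes n m p sigma N istar :: nat
    and A B C D T Ah Bh Ch Dh :: "nat \<Rightarrow> real mat"
    and phi ks :: "nat \<Rightarrow> nat"
    and u y x :: "nat \<Rightarrow> real vec"
  assumes dims: "\<And>j. j \<in> {1..sigma} \<Longrightarrow> A j \<in> carrier_mat n n \<and> B j \<in> carrier_mat n m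
                  \<and> C j \<in> carrier_mat p n \<and> D j \<in> carrier_mat p m"
    and obs_rank: "\<And>j. j \<in> {1..sigma} \<Longrightarrow> vec_space.rank (n * p) (obs_mat p (n - 1) (A j) (C j)) = n"
    and T_props: "\<And>j. j \<in> {1..sigma} \<Longrightarrow> T j \<in> carrier_mat n n \<and> invertible_mat (T j)"
    and est: "\<And>j. j \<in> {1..sigma} \<Longrightarrow>
               Ah j = minv (T j) * A j * T j \<and> Bh j = minv (T j) * B j
               \<and> Ch j = C j * T j \<and> Dh j = D j"
    and phi_range: "phi ` {1..N} = {1..sigma}"
    and u_dim: "\<And>k. k \<in> {1..N} \<Longrightarrow> u k \<in> carrier_vec m"
    and traj: "\<forall>k \<in> {1..N}. x k \<in> carrier_vec n
                  \<and> x (Suc k) = A (phi k) *\<^sub>v x k + B (phi k) *\<^sub>v u k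
                  \<and> y k = C (phi k) *\<^sub>v x k + D (phi k) *\<^sub>v u k"
    and ks0: "ks 0 = 1"
    and ksN: "ks (Suc istar) = N"
    and ks_mono: "\<And>i. i \<le> istar \<Longrightarrow> ks i < ks (Suc i)"
    and ks_const: "\<And>i k. i \<le> istar \<Longrightarrow> ks i \<le> k \<Longrightarrow> k < ks (Suc i) \<Longrightarrow> phi k = phi (ks i)"
    and n_pos: "1 \<le> n"
    and dwell: "n \<le> dstar ks istar"
    and rank_Psi: "\<And>t. t \<in> {1..sigma - 1} \<Longrightarrow>
        vec_space.rank n (Psi_mat n p m Ah Bh Ch Dh phi u y ks istar t (Suc t)) = n"
begin

lemma ks_gap:
  assumes i: "i \<le> istar"
  shows "ks i + dstar ks istar \<le> ks (Suc i)"
proof -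
  have "dstar ks istar \<le> ks (Suc i) - ks i" unfolding dstar_def using i by (intro Min_le) auto
  then show ?thesis using ks_mono[OF i] by simp
qed

lemma ks_mono_le: "i \<le> j \<Longrightarrow> j \<le> Suc istar \<Longrightarrow> ks i \<le> ks j"
proof (induction j)
  case (Suc j)
  then show ?case using ks_mono[of j] by (cases "i = Suc j") auto
qed simp

lemma segment_mode:
  assumes i: "i \<le> istar" and l: "ks i \<le> l" "l < ks (Suc i)"
  shows "l \<in> {1..N} \<and> phi l = phi (ks i) \<and> phi (ks i) \<in> {1..sigma}"
proof -
  have "1 \<le> ks i" "ks (Suc i) \<le> N" using ks_mono_le[of 0 i] ks_mono_le[of "Suc i" "Suc istar"] i ks0 ksN by auto
  then have "ks i \<in> {1..N}" "l \<in> {1..N}" using l by auto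
  then show ?thesis using phi_range ks_const[OF i l] by blast
qed

lemma mode_one: "1 \<in> {1..sigma}"
proof -
  have "1 \<in> {1..N}" using ks_mono_le[of 0 "Suc istar"] ks0 ksN by simp
  then have "phi 1 \<in> {1..sigma}" using phi_range by blast
  then show ?thesis by simp
qed

lemma T_inverse:
  assumes "j \<in> {1..sigma}"
  shows "T j \<in> carrier_mat n n" "minv (T j) \<in> carrier_mat n n"
    "T j * minv (T j) = 1\<^sub>m n" "minv (T j) * T j = 1\<^sub>m n"
  using T_props[OF assms] minv_invertible_mat[of "T j" n] by auto

lemma hat_carrier:
  assumes "j \<in> {1..sigma}"
  shows "Ah j \<in> carrier_mat n n" "Bh j \<in> carrier_mat n m" "Ch j \<in> carrier_mat p n" "Dh j \<in> carrier_mat p m"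
  using est[OF assms] dims[OF assms] T_inverse[OF assms] by auto

lemma hat_trajectory:
  assumes j: "j \<in> {1..sigma}" and l: "l \<in> {1..N}" and phil: "phi l = j"
  shows "u l \<in> carrier_vec m \<and> minv (T j) *\<^sub>v x l \<in> carrier_vec n
      \<and> minv (T j) *\<^sub>v x (Suc l) = Ah j *\<^sub>v (minv (T j) *\<^sub>v x l) + Bh j *\<^sub>v u l
      \<and> y l = Ch j *\<^sub>v (minv (T j) *\<^sub>v x l) + Dh j *\<^sub>v u l"
proof -
  have A: "A j \<in> carrier_mat n n" and B: "B j \<in> carrier_mat n m" and C: "C j \<in> carrier_mat p n"
    using dims[OF j] by auto
  have x: "x l \<in> carrier_vec n" and u: "u l \<in> carrier_vec m" using bspec[OF traj l] u_dim[OF l] by auto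
  show ?thesis
    using bspec[OF traj l] est[OF j] phil u x T_inverse[OF j]
      similar_state_update[OF A B T_inverse(1,2,3)[OF j] x u]
      similar_output_map[OF C T_inverse(1,2,3)[OF j] x] by simp
qed

lemma det_gram_obs_hat:
  assumes j: "j \<in> {1..sigma}"
  shows "det (transpose_mat (obs_mat p (dstar ks istar - 1) (Ah j) (Ch j))
           * obs_mat p (dstar ks istar - 1) (Ah j) (Ch j)) \<noteq> 0"
  using det_gram_obs_similar[of "A j" n "C j" p "T j" "minv (T j)" "dstar ks istar - 1"]
    dims[OF j] T_inverse[OF j] est[OF j] n_pos dwell obs_rank[OF j] by auto

lemma switch_segments:
  assumes i: "i \<in> trans_idx phi ks istar nu mu"
  shows "1 \<le> ks i" "ks (i - 1) + dstar ks istar \<le> ks i" "ks i + dstar ks istar \<le> ks (Suc i)"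
    and "\<And>l. ks (i - 1) \<le> l \<Longrightarrow> l < ks i \<Longrightarrow> l \<in> {1..N} \<and> phi l = nu \<and> nu \<in> {1..sigma}"
    and "\<And>l. ks i \<le> l \<Longrightarrow> l < ks (Suc i) \<Longrightarrow> l \<in> {1..N} \<and> phi l = mu \<and> mu \<in> {1..sigma}"
proof -
  have i1: "1 \<le> i" "i \<le> istar" and nu: "phi (ks (i - 1)) = nu" and mu: "phi (ks i) = mu"
    using i unfolding trans_idx_def by auto
  have si: "Suc (i - 1) = i" using i1 by simp
  show "1 \<le> ks i" using ks_mono_le[of 0 i] i1 ks0 by simp
  show "ks (i - 1) + dstar ks istar \<le> ks i" using ks_gap[of "i - 1"] i1 si by simp
  show "ks i + dstar ks istar \<le> ks (Suc i)" using ks_gap[OF i1(2)] .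
  show "l \<in> {1..N} \<and> phi l = nu \<and> nu \<in> {1..sigma}" if "ks (i - 1) \<le> l" "l < ks i" for l
    using segment_mode[of "i - 1" l] that i1 si nu by simp
  show "l \<in> {1..N} \<and> phi l = mu \<and> mu \<in> {1..sigma}" if "ks i \<le> l" "l < ks (Suc i)" for l
    using segment_mode[OF i1(2) that] mu by simp
qed

lemma kappa_eq_hat_state:
  assumes i: "i \<in> trans_idx phi ks istar t (Suc t)"
  shows "kappa n p m (dstar ks istar - 1) Ah Bh Ch Dh phi u y ks i = minv (T t) *\<^sub>v x (ks i)"
proof -
  define q where "q = dstar ks istar - 1"
  note seg = switch_segments[OF i]
  have d: "1 \<le> dstar ks istar" using dwell n_pos by simp
  have lt: "ks (i - 1) < ks i" using seg(2) d by simp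
  have t: "t \<in> {1..sigma}" using seg(4)[of "ks (i - 1)"] lt by simp
  have nu: "phi (ks (i - 1)) = t" using seg(4)[of "ks (i - 1)"] lt by simp
  note hat = hat_trajectory[OF t] and H = hat_carrier[OF t]
  have step: "\<And>l. ks (i - 1) \<le> l \<Longrightarrow> l < ks i \<Longrightarrow> u l \<in> carrier_vec m
      \<and> minv (T t) *\<^sub>v x (Suc l) = Ah t *\<^sub>v (minv (T t) *\<^sub>v x l) + Bh t *\<^sub>v u l"
    using hat seg(4) by blast
  have xk: "minv (T t) *\<^sub>v x (ks (i - 1)) \<in> carrier_vec n" using hat seg(4) lt by blast
  have "xhat p m q Ah Bh Ch Dh phi u y (ks (i - 1)) = minv (T t) *\<^sub>v x (ks (i - 1))"
    by (rule xhat_eq_state[where x="\<lambda>l. minv (T t) *\<^sub>v x l" and Ah=Ah and Bh=Bh and Ch=Ch and Dh=Dh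
        and nu=t and phi=phi and k="ks (i - 1)" and u=u and y=y and q=q and p=p and m=m,
        OF H nu xk _ _ det_gram_obs_hat[OF t, folded q_def]])
      (use hat seg(2,4) d in \<open>auto simp: q_def\<close>)
  then show ?thesis unfolding q_def[symmetric]
    by (rule kappa_eq_state[where x="\<lambda>l. minv (T t) *\<^sub>v x l" and Ah=Ah and Bh=Bh and nu=t
        and phi=phi and ks=ks and i=i and u=u, OF H(1,2) nu lt xk _ step])
qed

lemma Zvec_eq_hat_state:
  assumes i: "i \<in> trans_idx phi ks istar t (Suc t)"
  shows "Zvec p (dstar ks istar - 1) Ah Bh Ch Dh phi u y ks i
       = obs_mat p (dstar ks istar - 1) (Ah (Suc t)) (Ch (Suc t)) *\<^sub>v (minv (T (Suc t)) *\<^sub>v x (ks i))"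
proof -
  note seg = switch_segments[OF i]
  have d: "1 \<le> dstar ks istar" using dwell n_pos by simp
  have lt: "ks i < ks (Suc i)" using seg(3) d by simp
  have t: "Suc t \<in> {1..sigma}" and mu: "phi (ks i) = Suc t" using seg(5)[of "ks i"] lt by auto
  note hat = hat_trajectory[OF t]
  have xk: "minv (T (Suc t)) *\<^sub>v x (ks i) \<in> carrier_vec n" using hat seg(5) lt by blast
  show ?thesis
    by (rule Zvec_eq_obs[where x="\<lambda>l. minv (T (Suc t)) *\<^sub>v x l" and Ah=Ah and Bh=Bh and Ch=Ch and Dh=Dh
        and mu="Suc t" and phi=phi and ks=ks and i=i and u=u and y=y, OF hat_carrier[OF t] mu seg(1) xk])
      (use hat seg(3,5) d in auto)
qed

lemma Ups_step_eq:
  assumes t: "t \<in> {1..sigma - 1}"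
  shows "Ups_step n p m Ah Bh Ch Dh phi u y ks istar t = minv (T (Suc t)) * T t"
proof (rule Ups_step_eqI[OF _ _ det_gram_obs_hat rank_Psi[OF t]])
  have tS: "t \<in> {1..sigma}" "Suc t \<in> {1..sigma}" using t by auto
  let ?O = "obs_mat p (dstar ks istar - 1) (Ah (Suc t)) (Ch (Suc t))"
  have N: "minv (T (Suc t)) * T t \<in> carrier_mat n n" using T_inverse[OF tS(1)] T_inverse[OF tS(2)] by simp
  show "Ah (Suc t) \<in> carrier_mat n n" "minv (T (Suc t)) * T t \<in> carrier_mat n n" "Suc t \<in> {1..sigma}"
    using hat_carrier[OF tS(2)] N tS by auto
  fix i assume i: "i \<in> trans_idx phi ks istar t (Suc t)"
  have x: "x (ks i) \<in> carrier_vec n"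
    using switch_segments(1,3,5)[OF i] traj dwell n_pos by force
  show "kappa n p m (dstar ks istar - 1) Ah Bh Ch Dh phi u y ks i \<in> carrier_vec n"
    unfolding kappa_eq_hat_state[OF i] using T_inverse(2)[OF tS(1)] x by simp
  have "(?O * (minv (T (Suc t)) * T t)) *\<^sub>v (minv (T t) *\<^sub>v x (ks i))
      = ?O *\<^sub>v (minv (T (Suc t)) *\<^sub>v (T t *\<^sub>v (minv (T t) *\<^sub>v x (ks i))))"
  proof -
    have v: "minv (T t) *\<^sub>v x (ks i) \<in> carrier_vec n" using T_inverse(2)[OF tS(1)] x by simp
    show ?thesis
      using assoc_mult_mat_vec[OF obs_mat_carrier[OF hat_carrier(1)[OF tS(2)]] N v]
        assoc_mult_mat_vec[OF T_inverse(2)[OF tS(2)] T_inverse(1)[OF tS(1)] v] by simp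
  qed
  also have "T t *\<^sub>v (minv (T t) *\<^sub>v x (ks i)) = x (ks i)"
    using assoc_mult_mat_vec[OF T_inverse(1,2)[OF tS(1)] x, symmetric] T_inverse(3)[OF tS(1)] x by simp
  finally show "Zvec p (dstar ks istar - 1) Ah Bh Ch Dh phi u y ks i
      = (?O * (minv (T (Suc t)) * T t)) *\<^sub>v kappa n p m (dstar ks istar - 1) Ah Bh Ch Dh phi u y ks i"
    unfolding kappa_eq_hat_state[OF i] Zvec_eq_hat_state[OF i] by simp
qed

lemma Ups_chain_eq:
  assumes "mu \<in> {1..sigma}"
  shows "Ups_chain n (Ups_step n p m Ah Bh Ch Dh phi u y ks istar) mu = minv (T 1) * T mu"
  by (rule Ups_chain_telescope[where T=T and U="Ups_step n p m Ah Bh Ch Dh phi u y ks istar",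
        OF T_props Ups_step_eq assms])

lemma rebased_realization:
  assumes mu: "mu \<in> {1..sigma}"
  defines "U \<equiv> Ups_chain n (Ups_step n p m Ah Bh Ch Dh phi u y ks istar)"
  shows "U mu * Ah mu * minv (U mu) = minv (T 1) * A mu * T 1 \<and> U mu * Bh mu = minv (T 1) * B mu
      \<and> Ch mu * minv (U mu) = C mu * T 1 \<and> Dh mu = D mu"
  using rebase_estimate[of "A mu" n "B mu" m "C mu" p "T mu" "T 1"] Ups_chain_eq[OF mu] est[OF mu]
    dims[OF mu] T_props[OF mu] T_props[OF mode_one] unfolding U_def by auto

end

theorem theorem3:
  fixes n m p sigma N istar :: nat
    and A B C D T Ah Bh Ch Dh :: "nat \<Rightarrow> real mat"
    and phi ks :: "nat \<Rightarrow> nat"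
    and u y :: "nat \<Rightarrow> real vec"
  assumes n2: "n \<ge> 2"
    and dims: "\<And>j. j \<in> {1..sigma} \<Longrightarrow> A j \<in> carrier_mat n n \<and> B j \<in> carrier_mat n m
                  \<and> C j \<in> carrier_mat p n \<and> D j \<in> carrier_mat p m"
    and minimal: "\<And>j. j \<in> {1..sigma} \<Longrightarrow> minimal_sys n m p (A j) (B j) (C j)"
    and A_inv: "\<And>j. j \<in> {1..sigma} \<Longrightarrow> invertible_mat (A j)"
    and bibo: "\<And>j. j \<in> {1..sigma} \<Longrightarrow> bibo_stable n m p (A j) (B j) (C j) (D j)"
    and T_props: "\<And>j. j \<in> {1..sigma} \<Longrightarrow> T j \<in> carrier_mat n n \<and> invertible_mat (T j)"
    and est: "\<And>j. j \<in> {1..sigma} \<Longrightarrow>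
               Ah j = minv (T j) * A j * T j \<and> Bh j = minv (T j) * B j
               \<and> Ch j = C j * T j \<and> Dh j = D j"
    and phi_range: "phi ` {1..N} = {1..sigma}"
    and u_dim: "\<And>k. k \<in> {1..N} \<Longrightarrow> u k \<in> carrier_vec m"
    and data: "\<exists>x. \<forall>k \<in> {1..N}. x k \<in> carrier_vec n
                  \<and> x (Suc k) = A (phi k) *\<^sub>v x k + B (phi k) *\<^sub>v u k
                  \<and> y k = C (phi k) *\<^sub>v x k + D (phi k) *\<^sub>v u k"
    and ks0: "ks 0 = 1"
    and ksN: "ks (Suc istar) = N"
    and ks_mono: "\<And>i. i \<le> istar \<Longrightarrow> ks i < ks (Suc i)"
    and ks_const: "\<And>i k. i \<le> istar \<Longrightarrow> ks i \<le> k \<Longrightarrow> k < ks (Suc i) \<Longrightarrow> phi k = phi (ks i)"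
    and ks_switch: "\<And>i. i \<in> {1..istar} \<Longrightarrow> phi (ks i) \<noteq> phi (ks (i - 1))"
    and dwell: "dstar ks istar \<ge> n"
    and rank_Psi: "\<And>t. t \<in> {1..sigma - 1} \<Longrightarrow>
        vec_space.rank n (Psi_mat n p m Ah Bh Ch Dh phi u y ks istar t (Suc t)) = n"
  shows "(\<forall>mu \<in> {1..sigma}.
            Ups_chain n (Ups_step n p m Ah Bh Ch Dh phi u y ks istar) mu = minv (T 1) * T mu)
       \<and> (let U = Ups_chain n (Ups_step n p m Ah Bh Ch Dh phi u y ks istar);
              Ac = (\<lambda>mu. U mu * Ah mu * minv (U mu));
              Bc = (\<lambda>mu. U mu * Bh mu);
              Cc = (\<lambda>mu. Ch mu * minv (U mu));
              Dc = (\<lambda>mu. Dh mu)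
          in (\<forall>phi' u' x0. (\<forall>k. phi' k \<in> {1..sigma}) \<longrightarrow> (\<forall>k. u' k \<in> carrier_vec m)
                 \<longrightarrow> x0 \<in> carrier_vec n \<longrightarrow>
                 (\<forall>k. lss_output Ac Bc Cc Dc phi' u' (minv (T 1) *\<^sub>v x0) k
                      = lss_output A B C D phi' u' x0 k))
           \<and> (\<forall>w. w \<noteq> [] \<longrightarrow> set w \<subseteq> {1..sigma} \<longrightarrow>
                 markov Ac Bc Cc Dc w = markov A B C D w))"
proof -
  have obs_rank: "\<And>j. j \<in> {1..sigma} \<Longrightarrow> vec_space.rank (n * p) (obs_mat p (n - 1) (A j) (C j)) = n"
    using minimal unfolding minimal_sys_def by blast
  have n_pos: "1 \<le> n" using n2 by simp
  obtain x where "lss_experiment n m p sigma N istar A B C D T Ah Bh Ch Dh phi ks u y x"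
    using data lss_experiment.intro[OF dims obs_rank T_props est phi_range u_dim _ ks0 ksN ks_mono ks_const
        n_pos dwell rank_Psi] by blast
  then interpret lss_experiment n m p sigma N istar A B C D T Ah Bh Ch Dh phi ks u y x .
  note S = T_inverse(2,1,3)[OF mode_one]
  show ?thesis
    unfolding Let_def
    by (intro conjI allI impI ballI Ups_chain_eq lss_output_similar[OF S] markov_similar[OF S])
      (use dims rebased_realization in blast)+
qed

end
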